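(* There are absolute constants $c_1,c_2>0$ such that for every integer $k\ge2$ there are infinitely many $n$ for which some sequence $S_k\in[n]^n$ satisfies all of: - ${\mathit LF}^{k-1}(S_k)\ge c_1\frac nk\log_2(n/k)$; - ${\mathit LF}^k(S_k)\le c_2 n$; - $S_k$ avoids the pattern $(k+1,k,\dots,1)$; - $\mathrm{OPT}(S_k)\le c_2 n$.
   Context: For a BST $T$, $d_T(a,b)$ is the number of edges on the path between $a$ and $b$. $q$-lazy finger bound, for $q\ge1$: for a BST $T$ on $[n]$ and $S=(s_1,\dots,s_m)$, a finger strategy consists of initial positions $\vec\ell\in[n]^q$ and assignments $\vec f\in[q]^m$, where finger $f_t$ serves $s_t$ and then sits at $s_t$. The cost is $\sum_t(1+d_T(s_t,\sigma(f_t,t)))$, where $\sigma(i,t)$ is the position of finger $i$ just before time $t$. ${\mathit LF}^q_T(S)$ is the minimum over strategies, and ${\mathit LF}^q(S)=\min_T{\mathit LF}^q_T(S)$ over BSTs $T$ on $[n]$. A sequence avoids a pattern $\pi$ of length $r$ if no subsequence $x_{i_1},\dots,x_{i_r}$ ($i_1<\dots<i_r$) satisfies $x_{i_a}<x_{i_b}\iff\pi(a)<\pi(b)$. Dynamic BST model: an algorithm chooses an initial BST on $[n]$. To serve each access it touches a connected set of nodes containing the root and the accessed key, may rearrange them into any BST shape, and pays the number of touched nodes. $\mathrm{OPT}(S)$ is the minimum total cost over all offline algorithms. *)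

theory Defs
  imports Complex_Main "HOL-Library.Tree"
begin

definition bst_on :: "nat \<Rightarrow> nat tree \<Rightarrow> bool" where
  "bst_on n T \<longleftrightarrow> bst T \<and> set_tree T = {1..n}"

fun path :: "nat tree \<Rightarrow> nat \<Rightarrow> nat list" where
  "path Leaf a = []"
| "path (Node l x r) a = x # (if a < x then path l a else if x < a then path r a else [])"

fun lcp :: "nat list \<Rightarrow> nat list \<Rightarrow> nat" where
  "lcp (x # xs) (y # ys) = (if x = y then Suc (lcp xs ys) else 0)"
| "lcp _ _ = 0"

(* d_T(a,b): number of edges between a and b  (depth a + depth b - 2 depth(lca)) *)
definition dist_T :: "nat tree \<Rightarrow> nat \<Rightarrow> nat \<Rightarrow> nat" where
  "dist_T T a b = length (path T a) + length (path T b) - 2 * lcp (path T a) (path T b)"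

(* cost of a finger strategy: pos = current finger positions (list indexed by finger 0..q-1),
   F = finger assignments, S = access sequence *)
fun finger_cost :: "nat tree \<Rightarrow> nat list \<Rightarrow> nat list \<Rightarrow> nat list \<Rightarrow> nat" where
  "finger_cost T pos (f # F) (s # S) = 1 + dist_T T s (pos ! f) + finger_cost T (pos[f := s]) F S"
| "finger_cost T pos _ _ = 0"

definition LF_T :: "nat \<Rightarrow> nat tree \<Rightarrow> nat list \<Rightarrow> nat" where
  "LF_T q T S = Inf {finger_cost T l F S | l F.
      length l = q \<and> set l \<subseteq> set_tree T \<and> length F = length S \<and> set F \<subseteq> {..<q}}"

definition LF :: "nat \<Rightarrow> nat \<Rightarrow> nat list \<Rightarrow> nat" where
  "LF q n S = Inf {LF_T q T S | T. bst_on n T}"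

definition contains_pattern :: "nat list \<Rightarrow> nat list \<Rightarrow> bool" where
  "contains_pattern xs pat \<longleftrightarrow> (\<exists>is. length is = length pat \<and> sorted_wrt (<) is \<and>
      (\<forall>i\<in>set is. i < length xs) \<and>
      (\<forall>a<length pat. \<forall>b<length pat. xs ! (is ! a) < xs ! (is ! b) \<longleftrightarrow> pat ! a < pat ! b))"

definition avoids :: "nat list \<Rightarrow> nat list \<Rightarrow> bool" where
  "avoids xs pat \<longleftrightarrow> \<not> contains_pattern xs pat"

fun subtree_at :: "nat tree \<Rightarrow> nat \<Rightarrow> nat tree" where
  "subtree_at Leaf x = Leaf"
| "subtree_at (Node l y r) x = (if x < y then subtree_at l x else if y < x then subtree_at r x else Node l y r)"

(* One step of the dynamic BST model: touch a connected set P containing the root and s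
   (equivalently: P contains s and is closed under taking ancestors), rearrange it into any
   BST shape; the untouched subtrees hang off unchanged. *)
definition valid_step :: "nat tree \<Rightarrow> nat \<Rightarrow> nat set \<Rightarrow> nat tree \<Rightarrow> bool" where
  "valid_step T s P T' \<longleftrightarrow> s \<in> P \<and> P \<subseteq> set_tree T \<and> (\<forall>x\<in>P. set (path T x) \<subseteq> P) \<and>
      bst T' \<and> set_tree T' = set_tree T \<and> (\<forall>x \<in> set_tree T - P. subtree_at T' x = subtree_at T x)"

fun valid_exec :: "nat tree \<Rightarrow> nat list \<Rightarrow> (nat set \<times> nat tree) list \<Rightarrow> bool" where
  "valid_exec T [] [] = True"
| "valid_exec T (s # S) ((P, T') # R) = (valid_step T s P T' \<and> valid_exec T' S R)"
| "valid_exec T _ _ = False"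

definition exec_cost :: "(nat set \<times> nat tree) list \<Rightarrow> nat" where
  "exec_cost R = (\<Sum>(P, _) \<leftarrow> R. card P)"

definition OPT :: "nat \<Rightarrow> nat list \<Rightarrow> nat" where
  "OPT n S = Inf {exec_cost R | T0 R. bst_on n T0 \<and> valid_exec T0 S R}"

end

theory Submission
  imports Defs
begin

text \<open>
  The sequence \<open>hard_seq k (M + 1) M\<close> splits the keys into \<open>k\<close> tracks of \<open>M + 1\<close> consecutive keys;
  after \<open>k\<close> accesses to key 1 it runs \<open>M\<close> rounds, round \<open>j\<close> accessing the \<open>j\<close>-th key of every track
  in turn. With \<open>k\<close> fingers on the path tree, one per track, every access costs at most 2, so
  \<open>LF\<^sup>k = O(n)\<close>. Within a track the accessed keys increase, so a decreasing subsequence meets every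
  track at most once and the pattern \<open>(k + 1, \<dots>, 1)\<close> is avoided. An offline BST keeps the keys
  of the current round on a right spine, serves them by rotations, and rebuilds the tree for the
  next round touching \<open>O(k)\<close> nodes, so \<open>OPT = O(n)\<close>.

  With \<open>k - 1\<close> fingers, in every round some finger serves two keys of the round in succession,
  so the round costs at least the distance between the \<open>j\<close>-th keys of some two tracks \<open>a < b\<close>.
  For a fixed pair of tracks these keys form pairs \<open>X\<^sub>j < Y\<^sub>j\<close> increasing in \<open>j\<close>, and a potential
  argument over the subtrees of any BST (a subtree holding \<open>s\<close> of the keys pays \<open>s/2 \<cdot> ln s\<close>, and
  every split of the keys at a node is paid by edges of the \<open>X\<^sub>j\<close>--\<open>Y\<^sub>j\<close> paths) shows that \<open>m\<close> such
  pairs are at total distance at least \<open>m/2 \<cdot> ln m - m/2\<close>. Grouping the rounds by their closest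
  pair of tracks and taking \<open>M = 2 k\<^sup>2 L\<close> gives \<open>LF\<^sup>k\<^sup>-\<^sup>1 = \<Omega>(M log M) = \<Omega>((n/k) log (n/k))\<close>.
\<close>

lemma lcp_commute: "lcp xs ys = lcp ys xs"
  by (induction xs ys rule: lcp.induct) auto

lemma lcp_refl: "lcp xs xs = length xs"
  by (induction xs) auto

lemma dist_T_commute: "dist_T T a b = dist_T T b a"
  unfolding dist_T_def by (simp add: lcp_commute add.commute)

text \<open>For a subtree \<open>t\<close> of the ambient tree and keys \<open>x < y\<close> of the ambient tree, the number of
  edges of the \<open>x\<close>--\<open>y\<close> path whose lower endpoint lies in \<open>t\<close>.\<close>

definition path_edges_below :: "nat tree \<Rightarrow> nat \<Rightarrow> nat \<Rightarrow> nat" where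
  "path_edges_below t x y = (if x \<in> set_tree t \<and> y \<in> set_tree t then dist_T t x y
     else if x \<in> set_tree t then length (path t x)
     else if y \<in> set_tree t then length (path t y) else 0)"

lemma path_edges_below_Leaf [simp]: "path_edges_below Leaf x y = 0"
  by (simp add: path_edges_below_def)

lemma path_edges_below_Node:
  assumes bst: "bst (Node l a r)" and xy: "x < y"
  shows "path_edges_below (Node l a r) x y = path_edges_below l x y + path_edges_below r x y +
     (if (x \<in> set_tree (Node l a r)) \<noteq> (y \<in> set_tree (Node l a r)) then 1 else 0)"
proof -
  have L: "\<And>z. z \<in> set_tree l \<Longrightarrow> z < a" and R: "\<And>z. z \<in> set_tree r \<Longrightarrow> a < z"
    using bst by auto
  have lcp_lr: "lcp (path l x) (path r y) = 0" if xl: "x \<in> set_tree l" and yr: "y \<in> set_tree r"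
  proof -
    obtain l1 b l2 r1 c r2 where "l = Node l1 b l2" "r = Node r1 c r2"
      using xl yr by (cases l; cases r) auto
    moreover have "b < a" "a < c" using L R calculation by auto
    ultimately show ?thesis by simp
  qed
  show ?thesis
    using L R xy lcp_lr unfolding path_edges_below_def dist_T_def
    by (auto simp: not_less_iff_gr_or_eq dest: L R)
qed

definition half_xlnx :: "nat \<Rightarrow> real" where
  "half_xlnx s = real s / 2 * ln (real s)"

lemma half_xlnx_nonneg: "0 \<le> half_xlnx s"
  unfolding half_xlnx_def by (cases "s = 0") auto

lemma half_xlnx_0 [simp]: "half_xlnx 0 = 0"
  by (simp add: half_xlnx_def)

lemma mult_ln_diff_ge:
  fixes a u :: real
  assumes "a > 0" "u > 0"
  shows "a - u \<le> a * (ln a - ln u)"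
proof -
  have "ln (u / a) \<le> u / a - 1" using assms by (intro ln_le_minus_one) auto
  hence "a * (ln u - ln a) \<le> a * (u / a - 1)"
    using assms by (intro mult_left_mono) (auto simp: ln_div)
  thus ?thesis using assms by (simp add: algebra_simps)
qed

lemma half_xlnx_add_ge: "half_xlnx (a + b) - real (a + b) / 2 \<le> half_xlnx a + half_xlnx b"
proof (cases "a = 0 \<or> b = 0")
  case True thus ?thesis using half_xlnx_nonneg by (auto simp: half_xlnx_def)
next
  case False
  hence a: "real a > 0" and b: "real b > 0" by auto
  let ?u = "real a + real b"
  have "real a - ?u \<le> real a * (ln (real a) - ln ?u)" "real b - ?u \<le> real b * (ln (real b) - ln ?u)"
    using mult_ln_diff_ge[of "real a" ?u] mult_ln_diff_ge[of "real b" ?u] a b by simp_all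
  hence "?u * ln ?u - ?u \<le> real a * ln (real a) + real b * ln (real b)"
    by (simp add: algebra_simps)
  thus ?thesis unfolding half_xlnx_def by (simp add: algebra_simps add_divide_distrib)
qed

lemma half_xlnx_le_pred:
  assumes "s \<ge> 1"
  shows "half_xlnx s \<le> half_xlnx (s - 1) + (real s + 1) / 2"
proof (cases "s = 1")
  case True thus ?thesis by (simp add: half_xlnx_def)
next
  case False
  define t where "t = real s - 1"
  have t: "t \<ge> 1" "real (s - 1) = t" using False assms by (auto simp: t_def)
  have "ln (real s) - ln t \<le> real s / t - 1"
    using ln_le_minus_one[of "real s / t"] t(1) assms by (simp add: ln_div)
  hence "t * (ln (real s) - ln t) \<le> t * (real s / t - 1)"
    using t(1) by (intro mult_left_mono) auto
  also have "\<dots> = 1" using t by (simp add: t_def field_simps)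
  finally have "t * (ln (real s) - ln t) \<le> 1" .
  moreover have "ln (real s) \<le> real s - 1" using assms by (intro ln_le_minus_one) auto
  ultimately have "real s * ln (real s) - t * ln t \<le> real s + 1"
    by (simp add: t_def algebra_simps)
  thus ?thesis unfolding half_xlnx_def using t by (simp add: field_simps)
qed

lemma ln_ge_1:
  assumes "m \<ge> 3" shows "1 \<le> ln (real m)"
proof -
  have "exp 1 \<le> real m" using exp_le assms by linarith
  thus ?thesis using assms by (subst ln_ge_iff) auto
qed

lemma half_xlnx_minus_half_mono:
  assumes "m \<ge> 3" "m \<le> u"
  shows "half_xlnx m - real m / 2 \<le> half_xlnx u - real u / 2"
proof -
  have l1: "1 \<le> ln (real m)" using ln_ge_1 assms by auto
  have "real u * ln (real m) \<le> real u * ln (real u)"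
    using assms by (intro mult_left_mono) auto
  moreover have "(real u - real m) * 1 \<le> (real u - real m) * ln (real m)"
    using l1 assms by (intro mult_left_mono) auto
  ultimately have "real u - real m \<le> real u * ln (real u) - real m * ln (real m)"
    by (simp add: algebra_simps)
  thus ?thesis unfolding half_xlnx_def by (simp add: field_simps)
qed

lemma half_xlnx_split:
  assumes "s = sl + sr + d" "d \<le> 1"
  shows "half_xlnx s \<le> half_xlnx sl + half_xlnx sr + real s"
proof -
  have sub: "half_xlnx (sl + sr) - real (sl + sr) / 2 \<le> half_xlnx sl + half_xlnx sr"
    by (rule half_xlnx_add_ge)
  show ?thesis
  proof (cases "d = 0")
    case True
    hence s_eq: "s = sl + sr" using assms by simp
    show ?thesis unfolding s_eq using sub by (simp add: field_simps)
  next
    case False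
    hence "sl + sr = s - 1" "s \<ge> 1" using assms by auto
    thus ?thesis using sub half_xlnx_le_pred[of s] by (simp add: field_simps)
  qed
qed

text \<open>At a subtree holding \<open>s\<close> of the \<open>2 m\<close> keys, the number of separated pairs is only bounded
  below by \<open>min s (2 m - s)\<close>, so beyond \<open>m\<close> keys the potential stays at its value at \<open>m\<close>.\<close>

definition capped_half_xlnx :: "nat \<Rightarrow> nat \<Rightarrow> real" where
  "capped_half_xlnx m s = (if s \<le> m then half_xlnx s else half_xlnx m - real m / 2)"

lemma capped_half_xlnx_split:
  assumes m: "m \<ge> 3" and s: "s = sl + sr + d" "d \<le> 1" "s \<le> 2 * m"
  shows "capped_half_xlnx m s \<le>
    capped_half_xlnx m sl + capped_half_xlnx m sr + real (min s (2 * m - s))"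
proof (cases "s \<le> m")
  case True
  thus ?thesis using half_xlnx_split[OF s(1,2)] s by (simp add: capped_half_xlnx_def)
next
  case False
  show ?thesis
  proof (cases "sl \<le> m \<and> sr \<le> m")
    case True
    have "half_xlnx m - real m / 2 \<le> half_xlnx (sl + sr) - real (sl + sr) / 2"
      using False s by (intro half_xlnx_minus_half_mono[OF m]) auto
    thus ?thesis using False True half_xlnx_add_ge[of sl sr]
      by (simp add: capped_half_xlnx_def)
  next
    case False
    hence "sl \<le> m \<or> sr \<le> m" using s by auto
    thus ?thesis using \<open>\<not> s \<le> m\<close> False half_xlnx_nonneg
      by (auto simp: capped_half_xlnx_def)
  qed
qed

locale shifted_pairs =
  fixes T :: "nat tree" and J :: "nat set" and X Y :: "nat \<Rightarrow> nat"
  assumes bst_T: "bst T"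
    and finite_J: "finite J"
    and X_mono: "\<And>i j. i \<in> J \<Longrightarrow> j \<in> J \<Longrightarrow> i < j \<Longrightarrow> X i < X j"
    and Y_mono: "\<And>i j. i \<in> J \<Longrightarrow> j \<in> J \<Longrightarrow> i < j \<Longrightarrow> Y i < Y j"
    and X_less_Y: "\<And>i j. i \<in> J \<Longrightarrow> j \<in> J \<Longrightarrow> X i < Y j"
    and X_in_T: "\<And>j. j \<in> J \<Longrightarrow> X j \<in> set_tree T"
    and Y_in_T: "\<And>j. j \<in> J \<Longrightarrow> Y j \<in> set_tree T"
begin

definition cut_sum :: "nat tree \<Rightarrow> nat" where
  "cut_sum t = (\<Sum>j\<in>J. path_edges_below t (X j) (Y j))"

definition key_count :: "nat tree \<Rightarrow> nat" where
  "key_count t = card {j\<in>J. X j \<in> set_tree t} + card {j\<in>J. Y j \<in> set_tree t}"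

definition split_count :: "nat tree \<Rightarrow> nat" where
  "split_count t = card {j\<in>J. (X j \<in> set_tree t) \<noteq> (Y j \<in> set_tree t)}"

definition gap_free :: "nat tree \<Rightarrow> bool" where
  "gap_free t \<longleftrightarrow>
     (\<forall>u\<in>set_tree T. \<forall>x\<in>set_tree t. \<forall>y\<in>set_tree t. x < u \<longrightarrow> u < y \<longrightarrow> u \<in> set_tree t)"

lemma cut_sum_Node:
  assumes "bst (Node l a r)"
  shows "cut_sum (Node l a r) = cut_sum l + cut_sum r + split_count (Node l a r)"
proof -
  have "cut_sum (Node l a r) = (\<Sum>j\<in>J. path_edges_below l (X j) (Y j) + path_edges_below r (X j) (Y j) +
     (if (X j \<in> set_tree (Node l a r)) \<noteq> (Y j \<in> set_tree (Node l a r)) then 1 else 0))"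
    unfolding cut_sum_def by (intro sum.cong refl path_edges_below_Node[OF assms] X_less_Y)
  also have "\<dots> = cut_sum l + cut_sum r + split_count (Node l a r)"
    unfolding cut_sum_def split_count_def sum.distrib using finite_J
    by (simp add: sum.If_cases Collect_conj_eq Int_commute)
  finally show ?thesis .
qed

lemma gap_free_children:
  assumes "bst (Node l a r)" "gap_free (Node l a r)"
  shows "gap_free l" "gap_free r"
proof -
  have L: "\<forall>x\<in>set_tree l. x < a" and R: "\<forall>x\<in>set_tree r. a < x" using assms(1) by auto
  show "gap_free l" unfolding gap_free_def
  proof (intro ballI impI)
    fix u x y assume h: "u \<in> set_tree T" "x \<in> set_tree l" "y \<in> set_tree l" "x < u" "u < y"
    hence "u \<in> set_tree (Node l a r)" using assms(2) unfolding gap_free_def by auto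
    moreover have "u < a" using h L by (meson less_trans)
    ultimately show "u \<in> set_tree l" using R by auto
  qed
  show "gap_free r" unfolding gap_free_def
  proof (intro ballI impI)
    fix u x y assume h: "u \<in> set_tree T" "x \<in> set_tree r" "y \<in> set_tree r" "x < u" "u < y"
    hence "u \<in> set_tree (Node l a r)" using assms(2) unfolding gap_free_def by auto
    moreover have "a < u" using h R by (meson less_trans)
    ultimately show "u \<in> set_tree r" using L by auto
  qed
qed

lemma card_keys_in_Node:
  assumes "bst (Node l a r)"
  shows "card {j\<in>J. Z j \<in> set_tree (Node l a r)} =
     card {j\<in>J. Z j \<in> set_tree l} + card {j\<in>J. Z j \<in> set_tree r} + card {j\<in>J. Z j = a}"
proof -
  have disj: "set_tree l \<inter> set_tree r = {}" "a \<notin> set_tree l" "a \<notin> set_tree r"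
    using assms by fastforce+
  have "{j\<in>J. Z j \<in> set_tree (Node l a r)} =
    ({j\<in>J. Z j \<in> set_tree l} \<union> {j\<in>J. Z j \<in> set_tree r}) \<union> {j\<in>J. Z j = a}" by auto
  also have "card \<dots> = card ({j\<in>J. Z j \<in> set_tree l} \<union> {j\<in>J. Z j \<in> set_tree r}) + card {j\<in>J. Z j = a}"
    using disj finite_J by (intro card_Un_disjoint) auto
  also have "card ({j\<in>J. Z j \<in> set_tree l} \<union> {j\<in>J. Z j \<in> set_tree r}) =
      card {j\<in>J. Z j \<in> set_tree l} + card {j\<in>J. Z j \<in> set_tree r}"
    using disj finite_J by (intro card_Un_disjoint) auto
  finally show ?thesis .
qed

lemma card_keys_at_root: "card {j\<in>J. X j = a} + card {j\<in>J. Y j = a} \<le> 1"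
proof -
  have "inj_on X J" by (metis inj_onI linorder_neqE_nat X_mono less_irrefl)
  moreover have "inj_on Y J" by (metis inj_onI linorder_neqE_nat Y_mono less_irrefl)
  ultimately have "card {j\<in>J. X j = a} \<le> 1" "card {j\<in>J. Y j = a} \<le> 1"
    using finite_J by (auto simp: card_le_Suc0_iff_eq inj_on_def)
  moreover have "{j\<in>J. X j = a} = {} \<or> {j\<in>J. Y j = a} = {}"
    using X_less_Y by fastforce
  ultimately show ?thesis by (metis add.commute add_0 card.empty)
qed

lemma gap_free_covers:
  assumes "gap_free t" "i \<in> J" "X i \<in> set_tree t" "Y i \<in> set_tree t" "j \<in> J"
  shows "X j \<in> set_tree t \<or> Y j \<in> set_tree t"
proof (cases i j rule: linorder_cases)
  case less
  hence "X i < X j" "X j < Y i" using X_mono X_less_Y assms by auto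
  thus ?thesis using assms X_in_T unfolding gap_free_def by blast
next
  case greater
  hence "X i < Y j" "Y j < Y i" using Y_mono X_less_Y assms by auto
  thus ?thesis using assms Y_in_T unfolding gap_free_def by blast
qed (use assms in simp)

lemma split_count_ge:
  assumes "gap_free t"
  shows "min (key_count t) (2 * card J - key_count t) \<le> split_count t"
proof -
  define A where "A = {j\<in>J. X j \<in> set_tree t}"
  define B where "B = {j\<in>J. Y j \<in> set_tree t}"
  have fin: "finite A" "finite B" "A \<subseteq> J" "B \<subseteq> J" using finite_J by (auto simp: A_def B_def)
  have "split_count t = card (A \<union> B) - card (A \<inter> B)"
    unfolding split_count_def
    by (subst card_Diff_subset[symmetric])
      (use fin in \<open>auto intro: arg_cong[where f = card] simp: A_def B_def\<close>)
  moreover have "card (A \<union> B) + card (A \<inter> B) = key_count t"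
    using card_Un_Int[OF fin(1,2)] unfolding key_count_def A_def B_def by simp
  moreover have "card (A \<union> B) = card J" if "A \<inter> B \<noteq> {}"
  proof -
    have "A \<union> B = J" using that fin gap_free_covers[OF assms] by (auto simp: A_def B_def)
    thus ?thesis by simp
  qed
  ultimately show ?thesis by (cases "A \<inter> B = {}") auto
qed

lemma key_count_le: "key_count t \<le> 2 * card J"
proof -
  have "card {j\<in>J. P j} \<le> card J" for P using finite_J by (intro card_mono) auto
  thus ?thesis unfolding key_count_def by (simp add: add_mono mult_2)
qed

lemma capped_half_xlnx_le_cut_sum:
  assumes m: "card J \<ge> 3"
  shows "bst t \<Longrightarrow> gap_free t \<Longrightarrow> capped_half_xlnx (card J) (key_count t) \<le> real (cut_sum t)"
proof (induction t)
  case Leaf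
  show ?case by (simp add: cut_sum_def key_count_def capped_half_xlnx_def)
next
  case (Node l a r)
  have IH: "capped_half_xlnx (card J) (key_count l) \<le> real (cut_sum l)"
    "capped_half_xlnx (card J) (key_count r) \<le> real (cut_sum r)"
    using Node gap_free_children by auto
  define d where "d = card {j\<in>J. X j = a} + card {j\<in>J. Y j = a}"
  have "key_count (Node l a r) = key_count l + key_count r + d"
    using card_keys_in_Node[OF Node.prems(1), of X] card_keys_in_Node[OF Node.prems(1), of Y]
    by (simp add: key_count_def d_def)
  from capped_half_xlnx_split[OF m this _ key_count_le]
  have "capped_half_xlnx (card J) (key_count (Node l a r)) \<le>
      capped_half_xlnx (card J) (key_count l) + capped_half_xlnx (card J) (key_count r) +
      real (min (key_count (Node l a r)) (2 * card J - key_count (Node l a r)))"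
    using card_keys_at_root by (simp add: d_def)
  moreover have "real (min (key_count (Node l a r)) (2 * card J - key_count (Node l a r)))
      \<le> real (split_count (Node l a r))"
    using split_count_ge[OF Node.prems(2)] by linarith
  ultimately show ?case using IH cut_sum_Node[OF Node.prems(1)] by simp
qed

theorem sum_dist_ge:
  assumes "card J \<ge> 3"
  shows "half_xlnx (card J) - real (card J) / 2 \<le> real (\<Sum>j\<in>J. dist_T T (X j) (Y j))"
proof -
  have "gap_free T" unfolding gap_free_def by auto
  moreover have "{j\<in>J. X j \<in> set_tree T} = J" "{j\<in>J. Y j \<in> set_tree T} = J"
    using X_in_T Y_in_T by auto
  hence "key_count T = 2 * card J" unfolding key_count_def by simp
  moreover have "cut_sum T = (\<Sum>j\<in>J. dist_T T (X j) (Y j))"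
    unfolding cut_sum_def path_edges_below_def using X_in_T Y_in_T by (intro sum.cong) auto
  ultimately show ?thesis
    using capped_half_xlnx_le_cut_sum[OF assms bst_T] assms by (simp add: capped_half_xlnx_def)
qed

end

fun rpath :: "nat \<Rightarrow> nat \<Rightarrow> nat tree" where
  "rpath lo 0 = Leaf"
| "rpath lo (Suc c) = Node Leaf lo (rpath (Suc lo) c)"

lemma inorder_rpath: "inorder (rpath lo c) = [lo..<lo + c]"
  by (induction c arbitrary: lo) (auto simp: upt_conv_Cons)

lemma set_rpath: "set_tree (rpath lo c) = {lo..<lo + c}"
  by (metis inorder_rpath set_inorder set_upt)

lemma bst_on_iff_inorder: "inorder T = [1..<n + 1] \<Longrightarrow> bst_on n T"
  unfolding bst_on_def bst_iff_sorted_wrt_less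
  by (metis atLeastLessThanSuc_atLeastAtMost Suc_eq_plus1 set_inorder set_upt sorted_wrt_upt)

lemma bst_on_rpath: "bst_on n (rpath 1 n)"
  by (intro bst_on_iff_inorder) (simp add: inorder_rpath)

lemma path_rpath: "lo \<le> x \<Longrightarrow> x < lo + c \<Longrightarrow> path (rpath lo c) x = [lo..<Suc x]"
proof (induction c arbitrary: lo)
  case (Suc c)
  thus ?case
    using Suc.IH[of "Suc lo"] by (cases "x = lo") (auto simp: upt_conv_Cons)
qed simp

lemma lcp_upt: "lcp [lo..<x] [lo..<y] = min x y - lo"
proof (induction "min x y - lo" arbitrary: lo)
  case 0 thus ?case
    by (cases "lo < x"; cases "lo < y") (auto simp: upt_conv_Cons)
next
  case (Suc d)
  hence "lo < x" "lo < y" by auto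
  thus ?case using Suc by (simp add: upt_conv_Cons)
qed

lemma dist_rpath:
  assumes "x \<in> {lo..<lo + c}" "y \<in> {lo..<lo + c}"
  shows "dist_T (rpath lo c) x y = (if x \<le> y then y - x else x - y)"
proof -
  have "dist_T (rpath lo c) x y =
      length [lo..<Suc x] + length [lo..<Suc y] - 2 * lcp [lo..<Suc x] [lo..<Suc y]"
    unfolding dist_T_def using path_rpath[of lo x c] path_rpath[of lo y c] assms by simp
  also have "\<dots> = (Suc x - lo) + (Suc y - lo) - 2 * (min (Suc x) (Suc y) - lo)"
    by (simp only: lcp_upt length_upt)
  finally show ?thesis using assms by auto
qed

fun final_positions :: "nat list \<Rightarrow> nat list \<Rightarrow> nat list \<Rightarrow> nat list" where
  "final_positions pos (f # F) (s # S) = final_positions (pos[f := s]) F S"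
| "final_positions pos _ _ = pos"

lemma length_final_positions [simp]: "length (final_positions pos F S) = length pos"
  by (induction pos F S rule: final_positions.induct) auto

lemma finger_cost_append:
  "length F1 = length S1 \<Longrightarrow> finger_cost T pos (F1 @ F2) (S1 @ S2) =
     finger_cost T pos F1 S1 + finger_cost T (final_positions pos F1 S1) F2 S2"
proof (induction S1 arbitrary: pos F1)
  case (Cons s S1)
  thus ?case by (cases F1) auto
qed simp

lemma finger_cost_distinct_fingers:
  "distinct fs \<Longrightarrow> \<forall>f\<in>set fs. f < length pos \<Longrightarrow>
   finger_cost T pos fs (map g fs) = (\<Sum>f\<leftarrow>fs. 1 + dist_T T (g f) (pos ! f)) \<and>
   (\<forall>b < length pos. final_positions pos fs (map g fs) ! b = (if b \<in> set fs then g b else pos ! b))"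
proof (induction fs arbitrary: pos)
  case (Cons f fs)
  have "(\<Sum>f'\<leftarrow>fs. 1 + dist_T T (g f') (pos[f := g f] ! f')) = (\<Sum>f'\<leftarrow>fs. 1 + dist_T T (g f') (pos ! f'))"
    using Cons.prems
    by (intro arg_cong[where f = sum_list] map_cong refl) (metis distinct.simps(2) nth_list_update_neq)
  thus ?case using Cons.IH[of "pos[f := g f]"] Cons.prems by (auto simp: nth_list_update)
qed simp

text \<open>Pigeonhole over the fingers; in the induction, \<open>V\<close> accumulates the keys already served.\<close>

lemma finger_cost_pigeonhole:
  "distinct B \<Longrightarrow> set B \<inter> V = {} \<Longrightarrow> length F = length B \<Longrightarrow> \<forall>f\<in>set F. f < length pos \<Longrightarrow>
   card {f. f < length pos \<and> pos ! f \<notin> V} < length B \<Longrightarrow>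
   \<exists>x\<in>set B. \<exists>y\<in>set B \<union> V. x \<noteq> y \<and> dist_T T x y \<le> finger_cost T pos F B"
proof (induction B arbitrary: pos F V)
  case (Cons s B)
  obtain f F' where F: "F = f # F'" using Cons.prems(3) by (cases F) auto
  have fl: "f < length pos" using Cons.prems(4) F by simp
  have cost: "finger_cost T pos F (s # B) = 1 + dist_T T s (pos ! f) + finger_cost T (pos[f := s]) F' B"
    using F by simp
  show ?case
  proof (cases "pos ! f \<in> V")
    case True
    hence "s \<noteq> pos ! f" using Cons.prems(2) by auto
    thus ?thesis using True cost by (intro bexI[of _ s] bexI[of _ "pos ! f"]) auto
  next
    case False
    define outside where "outside pos V = {f'. f' < length pos \<and> pos ! f' \<notin> V}"
      for pos :: "nat list" and V
    have "outside (pos[f := s]) (insert s V) \<subseteq> outside pos V - {f}"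
      using fl by (auto simp: outside_def nth_list_update split: if_split_asm)
    hence "card (outside (pos[f := s]) (insert s V)) \<le> card (outside pos V - {f})"
      by (intro card_mono) (auto simp: outside_def)
    also have "\<dots> < length B"
    proof -
      have "f \<in> outside pos V" "finite (outside pos V)" using fl False by (auto simp: outside_def)
      hence "card (outside pos V - {f}) = card (outside pos V) - 1" "0 < card (outside pos V)"
        by (auto simp: card_Diff_singleton card_gt_0_iff)
      thus ?thesis using Cons.prems(5) unfolding outside_def length_Cons by linarith
    qed
    finally obtain x y where "x \<in> set B" "y \<in> set B \<union> insert s V" "x \<noteq> y"
        "dist_T T x y \<le> finger_cost T (pos[f := s]) F' B"
      using Cons.IH[of "insert s V" F' "pos[f := s]"] Cons.prems F by (auto simp: outside_def)
    thus ?thesis using cost by (intro bexI[of _ x] bexI[of _ y]) auto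
  qed
qed simp

lemma LF_le_finger_cost:
  assumes "bst_on n T" "length l = q" "set l \<subseteq> set_tree T" "length F = length S" "set F \<subseteq> {..<q}"
  shows "LF q n S \<le> finger_cost T l F S"
proof -
  have "LF_T q T S \<le> finger_cost T l F S"
    unfolding LF_T_def using assms by (intro cInf_lower) auto
  moreover have "LF q n S \<le> LF_T q T S"
    unfolding LF_def using assms(1) by (intro cInf_lower) auto
  ultimately show ?thesis by simp
qed

lemma LF_attained:
  assumes "q \<ge> 1" "n \<ge> 1"
  obtains T l F where "bst_on n T" "length l = q" "set l \<subseteq> set_tree T"
    "length F = length S" "set F \<subseteq> {..<q}" "LF q n S = finger_cost T l F S"
proof -
  have "{LF_T q T S | T. bst_on n T} \<noteq> {}" using bst_on_rpath by blast
  hence "LF q n S \<in> {LF_T q T S | T. bst_on n T}" unfolding LF_def by (rule Inf_nat_def1)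
  then obtain T where T: "bst_on n T" "LF q n S = LF_T q T S" by blast
  have "1 \<in> set_tree T" using T(1) assms by (simp add: bst_on_def)
  hence "finger_cost T (replicate q 1) (replicate (length S) 0) S \<in>
      {finger_cost T l F S | l F. length l = q \<and> set l \<subseteq> set_tree T \<and>
      length F = length S \<and> set F \<subseteq> {..<q}}"
    using assms by (intro CollectI exI[of _ "replicate q 1"] exI[of _ "replicate (length S) 0"]) auto
  hence "{finger_cost T l F S | l F. length l = q \<and> set l \<subseteq> set_tree T \<and>
      length F = length S \<and> set F \<subseteq> {..<q}} \<noteq> {}" by blast
  hence "LF_T q T S \<in> {finger_cost T l F S | l F. length l = q \<and> set l \<subseteq> set_tree T \<and>
      length F = length S \<and> set F \<subseteq> {..<q}}"
    unfolding LF_T_def by (rule Inf_nat_def1)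
  then obtain l F where "length l = q" "set l \<subseteq> set_tree T" "length F = length S" "set F \<subseteq> {..<q}"
      "LF_T q T S = finger_cost T l F S" by blast
  thus ?thesis using that T by metis
qed

text \<open>Keys \<open>a * w + 1, \<dots>, a * w + w\<close> form track \<open>a\<close>; round \<open>j\<close> accesses the \<open>j\<close>-th key of every
  track, in increasing order of tracks.\<close>

definition round_keys :: "nat \<Rightarrow> nat \<Rightarrow> nat \<Rightarrow> nat list" where
  "round_keys k w j = map (\<lambda>a. a * w + j + 1) [0..<k]"

definition hard_seq :: "nat \<Rightarrow> nat \<Rightarrow> nat \<Rightarrow> nat list" where
  "hard_seq k w M = replicate k 1 @ concat (map (round_keys k w) [0..<M])"

lemma length_concat_round_keys: "length (concat (map (round_keys k w) js)) = k * length js"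
  by (induction js) (auto simp: round_keys_def)

lemma track_key_le:
  fixes a k j w :: nat
  assumes "a < k" "j < w" shows "a * w + j + 1 \<le> k * w"
proof -
  have "Suc a * w \<le> k * w" using assms(1) by (intro mult_le_mono1) simp
  thus ?thesis using assms(2) by simp
qed

definition track_pairs :: "nat \<Rightarrow> (nat \<times> nat) set" where
  "track_pairs k = {(a, b). a < b \<and> b < k}"

lemma track_pairs_subset: "track_pairs k \<subseteq> {..<k} \<times> {..<k}"
  unfolding track_pairs_def by auto

lemma finite_track_pairs: "finite (track_pairs k)"
  using track_pairs_subset finite_subset by blast

lemma card_track_pairs_le: "card (track_pairs k) \<le> k * k"
  using card_mono[OF _ track_pairs_subset] by (simp add: card_cartesian_product)

definition round_min_dist :: "nat tree \<Rightarrow> nat \<Rightarrow> nat \<Rightarrow> nat \<Rightarrow> nat" where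
  "round_min_dist T k w j = Min ((\<lambda>(a, b). dist_T T (a * w + j + 1) (b * w + j + 1)) ` track_pairs k)"

lemma round_min_dist_le: "(a, b) \<in> track_pairs k \<Longrightarrow>
    round_min_dist T k w j \<le> dist_T T (a * w + j + 1) (b * w + j + 1)"
  unfolding round_min_dist_def using finite_track_pairs by (auto intro: Min_le)

lemma round_min_dist_attained:
  assumes "k \<ge> 2"
  obtains a b where "(a, b) \<in> track_pairs k"
    "dist_T T (a * w + j + 1) (b * w + j + 1) = round_min_dist T k w j"
proof -
  have "(0, 1) \<in> track_pairs k" using assms by (simp add: track_pairs_def)
  hence "round_min_dist T k w j \<in> (\<lambda>(a, b). dist_T T (a * w + j + 1) (b * w + j + 1)) ` track_pairs k"
    unfolding round_min_dist_def using finite_track_pairs by (intro Min_in) auto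
  thus ?thesis using that by auto
qed

text \<open>With \<open>k - 1\<close> fingers, some finger serves two keys of a round consecutively.\<close>

lemma round_min_dist_le_finger_cost:
  assumes k: "k \<ge> 2" and w: "w \<ge> 1" and lp: "length pos = k - 1"
    and lF: "length F = k" and Fl: "\<forall>f\<in>set F. f < k - 1"
  shows "round_min_dist T k w j \<le> finger_cost T pos F (round_keys k w j)"
proof -
  have "distinct (round_keys k w j)"
    unfolding round_keys_def using w by (auto simp: distinct_map inj_on_def)
  moreover have "card {f. f < length pos \<and> pos ! f \<notin> {}} < length (round_keys k w j)"
    using lp k card_mono[of "{..<length pos}" "{f. f < length pos}"] by (simp add: round_keys_def)
  ultimately have "\<exists>x\<in>set (round_keys k w j). \<exists>y\<in>set (round_keys k w j) \<union> {}.
      x \<noteq> y \<and> dist_T T x y \<le> finger_cost T pos F (round_keys k w j)"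
    using lF Fl lp by (intro finger_cost_pigeonhole) (auto simp: round_keys_def)
  then obtain x y where xy: "x \<in> set (round_keys k w j)" "y \<in> set (round_keys k w j)" "x \<noteq> y"
      "dist_T T x y \<le> finger_cost T pos F (round_keys k w j)" by blast
  obtain a b where ab: "a < k" "x = a * w + j + 1" "b < k" "y = b * w + j + 1"
    using xy(1,2) by (auto simp: round_keys_def)
  have "round_min_dist T k w j \<le> dist_T T x y"
  proof (cases "a < b")
    case True
    thus ?thesis using ab round_min_dist_le[of a b k] by (simp add: track_pairs_def)
  next
    case False
    hence "b < a" using ab xy(3) by (cases "a = b") auto
    thus ?thesis using ab round_min_dist_le[of b a k] by (simp add: track_pairs_def dist_T_commute)
  qed
  thus ?thesis using xy(4) by simp
qed

lemma sum_round_min_dist_le_finger_cost: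
  assumes k: "k \<ge> 2" and w: "w \<ge> 1"
  shows "length pos = k - 1 \<Longrightarrow> length F = length (concat (map (round_keys k w) js)) \<Longrightarrow>
    \<forall>f\<in>set F. f < k - 1 \<Longrightarrow>
    (\<Sum>j\<leftarrow>js. round_min_dist T k w j) \<le> finger_cost T pos F (concat (map (round_keys k w) js))"
proof (induction js arbitrary: pos F)
  case (Cons j js)
  have lF: "length (take k F) = length (round_keys k w j)"
    using Cons.prems(2) by (simp add: round_keys_def)
  have "finger_cost T pos F (concat (map (round_keys k w) (j # js))) =
     finger_cost T pos (take k F) (round_keys k w j) +
     finger_cost T (final_positions pos (take k F) (round_keys k w j)) (drop k F)
       (concat (map (round_keys k w) js))"
    using finger_cost_append[OF lF, of T pos "drop k F" "concat (map (round_keys k w) js)"] by simp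
  moreover have "round_min_dist T k w j \<le> finger_cost T pos (take k F) (round_keys k w j)"
    using lF Cons.prems(3)
    by (intro round_min_dist_le_finger_cost[OF k w Cons.prems(1)])
      (auto simp: round_keys_def dest: in_set_takeD)
  moreover have "(\<Sum>j\<leftarrow>js. round_min_dist T k w j) \<le>
      finger_cost T (final_positions pos (take k F) (round_keys k w j)) (drop k F)
        (concat (map (round_keys k w) js))"
    using Cons.prems lF by (intro Cons.IH) (auto dest: in_set_dropD)
  ultimately show ?case by simp
qed simp

text \<open>Between two tracks \<open>a < b\<close>, the keys visited in a set \<open>J\<close> of rounds form shifted pairs.\<close>

lemma sum_track_pair_dist_ge:
  assumes T: "bst T" and w: "M < w" and ab: "a < b"
    and keys: "\<And>j. j < M \<Longrightarrow> a * w + j + 1 \<in> set_tree T \<and> b * w + j + 1 \<in> set_tree T"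
    and J: "J \<subseteq> {..<M}" and L: "L \<ge> 3"
  shows "(real (card J) - real L) / 2 * (ln (real L) - 1) \<le>
    real (\<Sum>j\<in>J. dist_T T (a * w + j + 1) (b * w + j + 1))"
proof (cases "card J \<ge> L")
  case False
  hence "(real (card J) - real L) / 2 * (ln (real L) - 1) \<le> 0"
    using ln_ge_1[OF L] by (intro mult_nonpos_nonneg) auto
  thus ?thesis by (meson of_nat_0_le_iff order_trans)
next
  case True
  have "shifted_pairs T J (\<lambda>j. a * w + j + 1) (\<lambda>j. b * w + j + 1)"
  proof
    fix i j assume "i \<in> J" "j \<in> J"
    hence "i < w" using J w by auto
    moreover have "a * w + w \<le> b * w" using ab by (metis Suc_leI mult_Suc mult_le_mono1 add.commute)
    ultimately show "a * w + i + 1 < b * w + j + 1" by linarith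
  qed (use T J keys finite_subset in auto)
  hence "half_xlnx (card J) - real (card J) / 2 \<le>
      real (\<Sum>j\<in>J. dist_T T (a * w + j + 1) (b * w + j + 1))"
    using True L by (intro shifted_pairs.sum_dist_ge) auto
  moreover have "(real (card J) - real L) / 2 * (ln (real L) - 1) \<le>
      real (card J) / 2 * (ln (real (card J)) - 1)"
    using True L ln_ge_1[OF L] by (intro mult_mono) auto
  ultimately show ?thesis unfolding half_xlnx_def by (simp add: right_diff_distrib)
qed

lemma length_hard_seq: "length (hard_seq k w M) = k * Suc M"
  by (simp add: hard_seq_def length_concat_round_keys)

lemma set_hard_seq_subset:
  assumes "k \<ge> 1" "M < w" shows "set (hard_seq k w M) \<subseteq> {1..k * w}"
proof -
  have "k * 1 \<le> k * w" using assms by (intro mult_le_mono2) simp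
  moreover have "1 \<le> x \<and> x \<le> k * w" if "j < M" "x \<in> set (round_keys k w j)" for j x
    using that assms track_key_le[of _ k j w] by (auto simp: round_keys_def)
  ultimately show ?thesis using assms by (force simp: hard_seq_def)
qed

text \<open>Grouping the rounds by a closest pair of tracks, the \<open>k\<^sup>2\<close> classes contain \<open>M = 2 k\<^sup>2 L\<close>
  rounds in total.\<close>

lemma sum_round_min_dist_ge:
  assumes T: "bst T" and k: "k \<ge> 2" and w: "M < w"
    and keys: "\<And>a j. a < k \<Longrightarrow> j < M \<Longrightarrow> a * w + j + 1 \<in> set_tree T"
    and L: "L \<ge> 3" and M: "M = 2 * k * k * L"
  shows "real M / 4 * (ln (real L) - 1) \<le> real (\<Sum>j<M. round_min_dist T k w j)"
proof -
  define dist_pair where "dist_pair j = (\<lambda>(a, b). dist_T T (a * w + j + 1) (b * w + j + 1))" for j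
  define closest where "closest j = (SOME p. p \<in> track_pairs k \<and> dist_pair j p = round_min_dist T k w j)"
    for j
  have closest: "closest j \<in> track_pairs k \<and> dist_pair j (closest j) = round_min_dist T k w j" for j
    unfolding closest_def dist_pair_def
    by (rule someI_ex) (metis (mono_tags, lifting) round_min_dist_attained[OF k] case_prod_conv)
  define cls where "cls p = {j \<in> {..<M}. closest j = p}" for p
  have img: "closest ` {..<M} \<subseteq> track_pairs k" using closest by auto
  let ?c = "ln (real L) - 1"
  have "(\<Sum>p\<in>track_pairs k. (real (card (cls p)) - real L) / 2 * ?c) \<le>
      (\<Sum>p\<in>track_pairs k. real (\<Sum>j\<in>cls p. dist_pair j p))"
  proof (intro sum_mono)
    fix p assume "p \<in> track_pairs k"
    then obtain a b where ab: "p = (a, b)" "a < b" "b < k" by (auto simp: track_pairs_def)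
    show "(real (card (cls p)) - real L) / 2 * ?c \<le> real (\<Sum>j\<in>cls p. dist_pair j p)"
      unfolding dist_pair_def ab(1) prod.case
      by (rule sum_track_pair_dist_ge[OF T w ab(2) _ _ L])
        (use keys less_trans[OF ab(2,3)] ab(3) in \<open>auto simp: cls_def\<close>)
  qed
  also have "\<dots> = real (\<Sum>p\<in>track_pairs k. \<Sum>j\<in>cls p. dist_pair j (closest j))"
    by (simp add: cls_def)
  also have "\<dots> = real (\<Sum>j<M. dist_pair j (closest j))"
    unfolding cls_def by (subst sum.group[OF _ finite_track_pairs img]) simp_all
  also have "\<dots> = real (\<Sum>j<M. round_min_dist T k w j)" using closest by simp
  finally have grouped: "(\<Sum>p\<in>track_pairs k. (real (card (cls p)) - real L) / 2 * ?c) \<le>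
      real (\<Sum>j<M. round_min_dist T k w j)" .
  have "(\<Sum>p\<in>track_pairs k. card (cls p)) = M"
    using sum.group[OF _ finite_track_pairs img, of "\<lambda>_. 1::nat"] by (simp add: cls_def)
  hence "(\<Sum>p\<in>track_pairs k. (real (card (cls p)) - real L) / 2 * ?c) =
      (real M - real (card (track_pairs k)) * real L) / 2 * ?c"
    by (simp add: sum_distrib_right[symmetric] sum_divide_distrib[symmetric] sum_subtractf
        flip: of_nat_sum)
  also have "\<dots> \<ge> (real M - real (k * k) * real L) / 2 * ?c"
    using card_track_pairs_le[of k, THEN of_nat_mono[where 'a = real]] ln_ge_1[OF L]
    by (intro mult_right_mono divide_right_mono diff_left_mono mult_right_mono) auto
  also have "(real M - real (k * k) * real L) / 2 * ?c = real M / 4 * ?c"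
    using M by (simp add: field_simps)
  finally show ?thesis using grouped by linarith
qed

lemma LF_hard_seq_ge:
  assumes k: "k \<ge> 2" and w: "M < w" and L: "L \<ge> 3" and M: "M = 2 * k * k * L"
  shows "real M / 4 * (ln (real L) - 1) \<le> real (LF (k - 1) (k * w) (hard_seq k w M))"
proof -
  let ?S = "hard_seq k w M" and ?R = "concat (map (round_keys k w) [0..<M])"
  have "1 \<le> k - 1" "1 \<le> k * w" using k w by auto
  then obtain T l F where T: "bst_on (k * w) T" and l: "length l = k - 1" "set l \<subseteq> set_tree T"
    and F: "length F = length ?S" "set F \<subseteq> {..<k - 1}"
    and LF: "LF (k - 1) (k * w) ?S = finger_cost T l F ?S"
    by (rule LF_attained)
  have lF: "length (take k F) = length (replicate k (1::nat))"
    using F(1) by (simp add: hard_seq_def)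
  have "(\<Sum>j\<leftarrow>[0..<M]. round_min_dist T k w j) \<le>
      finger_cost T (final_positions l (take k F) (replicate k 1)) (drop k F) ?R"
    using k w l F by (intro sum_round_min_dist_le_finger_cost)
      (auto simp: hard_seq_def length_concat_round_keys dest: in_set_dropD)
  also have "\<dots> \<le> LF (k - 1) (k * w) ?S"
    using LF finger_cost_append[OF lF, of T l "drop k F" ?R] by (simp add: hard_seq_def)
  finally have "(\<Sum>j<M. round_min_dist T k w j) \<le> LF (k - 1) (k * w) ?S"
    by (simp add: interv_sum_list_conv_sum_set_nat lessThan_atLeast0)
  moreover have "real M / 4 * (ln (real L) - 1) \<le> real (\<Sum>j<M. round_min_dist T k w j)"
    using T w track_key_le by (intro sum_round_min_dist_ge[OF _ k w _ L M]) (auto simp: bst_on_def)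
  ultimately show ?thesis by linarith
qed

context
  fixes k w M :: nat
  assumes k: "k \<ge> 1" and w: "M < w"
begin

definition fingers_at_round :: "nat \<Rightarrow> nat list \<Rightarrow> bool" where
  "fingers_at_round j pos \<longleftrightarrow> length pos = k \<and>
     (\<forall>a<k. a * w + j \<le> pos ! a \<and> pos ! a \<le> a * w + j + 1 \<and> 1 \<le> pos ! a)"

lemma round_finger_cost_le:
  assumes pos: "fingers_at_round j pos" and j: "j < M"
  shows "finger_cost (rpath 1 (k * w)) pos [0..<k] (round_keys k w j) \<le> 2 * k \<and>
         fingers_at_round (Suc j) (final_positions pos [0..<k] (round_keys k w j))"
proof -
  define g where "g a = a * w + j + 1" for a
  have keys: "round_keys k w j = map g [0..<k]" by (simp add: round_keys_def g_def)
  have lp: "length pos = k" using pos by (simp add: fingers_at_round_def)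
  note cost = finger_cost_distinct_fingers[of "[0..<k]" pos "rpath 1 (k * w)" g]
  have "1 + dist_T (rpath 1 (k * w)) (g a) (pos ! a) \<le> 2" if "a \<in> set [0..<k]" for a
  proof -
    have "a < k" using that by simp
    hence "a * w + j \<le> pos ! a" "pos ! a \<le> a * w + j + 1" "1 \<le> pos ! a"
      "a * w + j + 1 \<le> k * w"
      using pos j w track_key_le[of a k j w] by (auto simp: fingers_at_round_def)
    thus ?thesis by (subst dist_rpath) (auto simp: g_def)
  qed
  hence "(\<Sum>a\<leftarrow>[0..<k]. 1 + dist_T (rpath 1 (k * w)) (g a) (pos ! a)) \<le> (\<Sum>a\<leftarrow>[0..<k]. 2)"
    by (intro sum_list_mono)
  hence "finger_cost (rpath 1 (k * w)) pos [0..<k] (round_keys k w j) \<le> 2 * k"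
    using cost lp keys by (simp add: sum_list_triv)
  moreover have "fingers_at_round (Suc j) (final_positions pos [0..<k] (round_keys k w j))"
    unfolding fingers_at_round_def using cost lp keys by (auto simp: g_def)
  ultimately show ?thesis by simp
qed

lemma rounds_finger_cost_le:
  "fingers_at_round j pos \<Longrightarrow> j + c \<le> M \<Longrightarrow>
   finger_cost (rpath 1 (k * w)) pos (concat (map (\<lambda>_. [0..<k]) [j..<j + c]))
     (concat (map (round_keys k w) [j..<j + c])) \<le> 2 * k * c"
proof (induction c arbitrary: j pos)
  case (Suc c)
  let ?pos' = "final_positions pos [0..<k] (round_keys k w j)"
  have split: "[j..<j + Suc c] = j # [Suc j..<Suc j + c]" by (simp add: upt_conv_Cons)
  have "length [0..<k] = length (round_keys k w j)" by (simp add: round_keys_def)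
  hence "finger_cost (rpath 1 (k * w)) pos (concat (map (\<lambda>_. [0..<k]) [j..<j + Suc c]))
      (concat (map (round_keys k w) [j..<j + Suc c])) =
    finger_cost (rpath 1 (k * w)) pos [0..<k] (round_keys k w j) +
    finger_cost (rpath 1 (k * w)) ?pos' (concat (map (\<lambda>_. [0..<k]) [Suc j..<Suc j + c]))
      (concat (map (round_keys k w) [Suc j..<Suc j + c]))"
    unfolding split by (simp add: finger_cost_append)
  also have "\<dots> \<le> 2 * k + 2 * k * c"
    using round_finger_cost_le[OF Suc.prems(1)] Suc.IH[of "Suc j" ?pos'] Suc.prems
    by (intro add_mono) auto
  finally show ?case by simp
qed simp

lemma finger_cost_replicate_first:
  assumes "pos ! 0 = 1"
  shows "finger_cost T pos (replicate c 0 @ F) (replicate c 1 @ S) = c + finger_cost T pos F S"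
proof -
  have "pos[0 := 1] = pos" using assms by (metis list_update_id)
  thus ?thesis using assms by (induction c) (auto simp: dist_T_def lcp_refl)
qed

text \<open>One finger per track, each following its track.\<close>

lemma LF_hard_seq_le: "LF k (k * w) (hard_seq k w M) \<le> 2 * (k * w)"
proof -
  define pos where "pos = map (\<lambda>a. a * w + 1) [0..<k]"
  define F where "F = replicate k 0 @ concat (map (\<lambda>_. [0..<k]) [0..<M])"
  have "fingers_at_round 0 pos" unfolding fingers_at_round_def pos_def by simp
  have "finger_cost (rpath 1 (k * w)) pos F (hard_seq k w M) =
      k + finger_cost (rpath 1 (k * w)) pos (concat (map (\<lambda>_. [0..<k]) [0..<M]))
        (concat (map (round_keys k w) [0..<M]))"
    unfolding F_def hard_seq_def using k by (intro finger_cost_replicate_first) (simp add: pos_def)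
  also have "\<dots> \<le> k + 2 * k * M"
    using rounds_finger_cost_le[OF \<open>fingers_at_round 0 pos\<close>, of M] by simp
  also have "\<dots> \<le> 2 * (k * w)"
    using w mult_le_mono2[of "M + 1" w "2 * k"] by (simp add: algebra_simps)
  finally have cost: "finger_cost (rpath 1 (k * w)) pos F (hard_seq k w M) \<le> 2 * (k * w)" .
  have "length (concat (map (\<lambda>_. [0..<k]) [0..<M])) = k * M" by (induction M) auto
  hence "length F = length (hard_seq k w M)"
    by (simp add: F_def hard_seq_def length_concat_round_keys)
  moreover have "set pos \<subseteq> set_tree (rpath 1 (k * w))"
    using track_key_le[of _ k 0 w] w by (auto simp: pos_def set_rpath)
  moreover have "set F \<subseteq> {..<k}" using k by (auto simp: F_def)
  ultimately have "LF k (k * w) (hard_seq k w M) \<le> finger_cost (rpath 1 (k * w)) pos F (hard_seq k w M)"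
    by (intro LF_le_finger_cost bst_on_rpath) (simp_all add: pos_def)
  thus ?thesis using cost by simp
qed

end

text \<open>Tree contexts with numbered holes: the inner nodes of a context are the nodes touched by a
  step of the dynamic BST model, the holes are the untouched subtrees hanging off them.\<close>

datatype ctx = Hole nat | CLeaf | CNode ctx nat ctx

primrec fill :: "ctx \<Rightarrow> (nat \<Rightarrow> nat tree) \<Rightarrow> nat tree" where
  "fill (Hole i) U = U i"
| "fill CLeaf U = Leaf"
| "fill (CNode C1 a C2) U = Node (fill C1 U) a (fill C2 U)"

primrec ctx_keys :: "ctx \<Rightarrow> nat set" where
  "ctx_keys (Hole i) = {}"
| "ctx_keys CLeaf = {}"
| "ctx_keys (CNode C1 a C2) = ctx_keys C1 \<union> {a} \<union> ctx_keys C2"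

primrec ctx_holes :: "ctx \<Rightarrow> nat set" where
  "ctx_holes (Hole i) = {i}"
| "ctx_holes CLeaf = {}"
| "ctx_holes (CNode C1 a C2) = ctx_holes C1 \<union> ctx_holes C2"

primrec ctx_size :: "ctx \<Rightarrow> nat" where
  "ctx_size (Hole i) = 0"
| "ctx_size CLeaf = 0"
| "ctx_size (CNode C1 a C2) = ctx_size C1 + 1 + ctx_size C2"

lemma set_tree_fill: "set_tree (fill C U) = ctx_keys C \<union> (\<Union>i\<in>ctx_holes C. set_tree (U i))"
  by (induction C) auto

lemma card_ctx_keys_le: "card (ctx_keys C) \<le> ctx_size C"
proof (induction C)
  case (CNode C1 a C2)
  have "card (ctx_keys C1 \<union> {a} \<union> ctx_keys C2) \<le> card (ctx_keys C1 \<union> {a}) + card (ctx_keys C2)"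
    by (rule card_Un_le)
  also have "card (ctx_keys C1 \<union> {a}) \<le> card (ctx_keys C1) + card {a}" by (rule card_Un_le)
  finally show ?case using CNode by simp
qed auto

lemma set_path_fill_subset:
  "bst (fill C U) \<Longrightarrow> x \<in> ctx_keys C \<Longrightarrow> set (path (fill C U) x) \<subseteq> ctx_keys C"
proof (induction C)
  case (CNode C1 a C2)
  have L: "\<forall>z\<in>set_tree (fill C1 U). z < a" and R: "\<forall>z\<in>set_tree (fill C2 U). a < z"
    using CNode.prems(1) by auto
  have b1: "bst (fill C1 U)" "bst (fill C2 U)" using CNode.prems(1) by auto
  show ?case
  proof (cases "x = a")
    case True thus ?thesis by simp
  next
    case False
    show ?thesis
    proof (cases "x < a")
      case True
      have "\<forall>z\<in>ctx_keys C2. a < z" using R set_tree_fill[of C2 U] by auto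
      hence "x \<notin> ctx_keys C2" using True by auto
      hence "x \<in> ctx_keys C1" using CNode.prems(2) False by auto
      thus ?thesis using True CNode.IH(1)[OF b1(1)] by auto
    next
      case nlt: False
      have "\<forall>z\<in>ctx_keys C1. z < a" using L set_tree_fill[of C1 U] by auto
      hence "x \<notin> ctx_keys C1" using nlt by auto
      hence "x \<in> ctx_keys C2" using CNode.prems(2) False by auto
      moreover have "a < x" using nlt False by simp
      ultimately show ?thesis using CNode.IH(2)[OF b1(2)] by auto
    qed
  qed
qed auto

lemma subtree_at_fill: "bst (fill C U) \<Longrightarrow> i \<in> ctx_holes C \<Longrightarrow> x \<in> set_tree (U i) \<Longrightarrow>
  subtree_at (fill C U) x = subtree_at (U i) x"
proof (induction C)
  case (CNode C1 a C2)
  have L: "\<forall>z\<in>set_tree (fill C1 U). z < a" and R: "\<forall>z\<in>set_tree (fill C2 U). a < z"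
    using CNode.prems(1) by auto
  have b1: "bst (fill C1 U)" "bst (fill C2 U)" using CNode.prems(1) by auto
  show ?case
  proof (cases "i \<in> ctx_holes C1")
    case True
    hence "x \<in> set_tree (fill C1 U)" using CNode.prems(3) set_tree_fill[of C1 U] by auto
    hence "x < a" using L by auto
    thus ?thesis using CNode.IH(1)[OF b1(1) True CNode.prems(3)] by simp
  next
    case False
    hence i2: "i \<in> ctx_holes C2" using CNode.prems(2) by simp
    hence "x \<in> set_tree (fill C2 U)" using CNode.prems(3) set_tree_fill[of C2 U] by auto
    hence "a < x" using R by auto
    thus ?thesis using CNode.IH(2)[OF b1(2) i2 CNode.prems(3)] by simp
  qed
qed auto

lemma valid_step_fill:
  assumes b: "bst (fill C U)" and b': "bst (fill C' U)"
    and st: "set_tree (fill C' U) = set_tree (fill C U)"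
    and hs: "ctx_holes C \<subseteq> ctx_holes C'" and s: "s \<in> ctx_keys C"
  shows "valid_step (fill C U) s (ctx_keys C) (fill C' U)"
  unfolding valid_step_def
proof (intro conjI ballI)
  show "s \<in> ctx_keys C" by (rule s)
  show "ctx_keys C \<subseteq> set_tree (fill C U)" using set_tree_fill[of C U] by auto
  show "\<And>x. x \<in> ctx_keys C \<Longrightarrow> set (path (fill C U) x) \<subseteq> ctx_keys C" using set_path_fill_subset[OF b] by auto
  show "bst (fill C' U)" by (rule b')
  show "set_tree (fill C' U) = set_tree (fill C U)" by (rule st)
  fix x assume x: "x \<in> set_tree (fill C U) - ctx_keys C"
  then obtain i where i: "i \<in> ctx_holes C" "x \<in> set_tree (U i)" using set_tree_fill[of C U] by auto
  show "subtree_at (fill C' U) x = subtree_at (fill C U) x"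
    using subtree_at_fill[OF b i] subtree_at_fill[OF b' _ i(2)] hs i(1) by auto
qed

lemma valid_step_root:
  assumes "bst (Node l a r)"
  shows "valid_step (Node l a r) a {a} (Node l a r)"
  unfolding valid_step_def using assms by auto

lemma valid_step_rotate:
  assumes b: "bst (Node A x (Node B y C))"
  shows "valid_step (Node A x (Node B y C)) y {x, y} (Node (Node A x B) y C)"
proof -
  define U where "U i = (if i = 0 then A else if i = 1 then B else C)" for i :: nat
  define C1 where "C1 = CNode (Hole 0) x (CNode (Hole 1) y (Hole 2))"
  define C2 where "C2 = CNode (CNode (Hole 0) x (Hole 1)) y (Hole 2)"
  have f1: "fill C1 U = Node A x (Node B y C)" by (simp add: C1_def U_def)
  have f2: "fill C2 U = Node (Node A x B) y C" by (simp add: C2_def U_def)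
  have b2: "bst (Node (Node A x B) y C)" using b
    unfolding bst_iff_sorted_wrt_less by simp
  have k: "ctx_keys C1 = {x, y}" by (auto simp: C1_def)
  have "valid_step (fill C1 U) y (ctx_keys C1) (fill C2 U)"
  proof (rule valid_step_fill)
    show "bst (fill C1 U)" unfolding f1 by (rule b)
    show "bst (fill C2 U)" unfolding f2 by (rule b2)
    show "set_tree (fill C2 U) = set_tree (fill C1 U)" unfolding f1 f2 by auto
    show "ctx_holes C1 \<subseteq> ctx_holes C2" by (simp add: C1_def C2_def)
    show "y \<in> ctx_keys C1" by (simp add: k)
  qed
  thus ?thesis using f1 f2 k by simp
qed

inductive run :: "nat tree \<Rightarrow> nat list \<Rightarrow> (nat set \<times> nat tree) list \<Rightarrow> nat tree \<Rightarrow> bool" where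
  run_nil: "run T [] [] T"
| run_cons: "valid_step T s P T1 \<Longrightarrow> run T1 S R T2 \<Longrightarrow> run T (s # S) ((P, T1) # R) T2"

lemma run_valid_exec: "run T S R T' \<Longrightarrow> valid_exec T S R"
  by (induction rule: run.induct) auto

lemma run_append: "run T S1 R1 T1 \<Longrightarrow> run T1 S2 R2 T2 \<Longrightarrow> run T (S1 @ S2) (R1 @ R2) T2"
  by (induction rule: run.induct) (auto intro: run.intros)

lemma run_single: "valid_step T s P T1 \<Longrightarrow> run T [s] [(P, T1)] T1"
  by (auto intro: run.intros)

lemma exec_cost_Nil [simp]: "exec_cost [] = 0"
  and exec_cost_Cons [simp]: "exec_cost ((P, T) # R) = card P + exec_cost R"
  and exec_cost_append [simp]: "exec_cost (R1 @ R2) = exec_cost R1 + exec_cost R2"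
  by (simp_all add: exec_cost_def)

lemma OPT_le_exec_cost: "bst_on n T \<Longrightarrow> run T S R T' \<Longrightarrow> OPT n S \<le> exec_cost R"
  unfolding OPT_def by (intro cInf_lower) (auto dest: run_valid_exec)

lemma upt_append: "i \<le> j \<Longrightarrow> j \<le> l \<Longrightarrow> [i..<j] @ [j..<l] = [i..<l]"
  using upt_add_eq_append[of i j "l - j"] by simp

fun lpath :: "nat \<Rightarrow> nat \<Rightarrow> nat tree" where
  "lpath lo 0 = Leaf"
| "lpath lo (Suc c) = Node (lpath lo c) (lo + c) Leaf"

lemma inorder_lpath: "inorder (lpath lo c) = [lo..<lo + c]"
  by (induction c) auto

fun right_chain :: "nat tree \<Rightarrow> (nat \<times> nat tree) list \<Rightarrow> nat tree" where
  "right_chain L [] = L"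
| "right_chain L ((c, G) # xs) = Node L c (right_chain G xs)"

fun left_chain :: "nat tree \<Rightarrow> (nat \<times> nat tree) list \<Rightarrow> nat tree" where
  "left_chain L [] = L"
| "left_chain L ((c, G) # xs) = left_chain (Node L c G) xs"

definition chain_inorder :: "(nat \<times> nat tree) list \<Rightarrow> nat list" where
  "chain_inorder xs = concat (map (\<lambda>(c, G). c # inorder G) xs)"

lemma chain_inorder_simps [simp]:
  "chain_inorder [] = []"
  "chain_inorder ((c, G) # xs) = c # inorder G @ chain_inorder xs"
  "chain_inorder (xs @ ys) = chain_inorder xs @ chain_inorder ys"
  by (auto simp: chain_inorder_def)

lemma inorder_right_chain: "inorder (right_chain L xs) = inorder L @ chain_inorder xs"
  by (induction L xs rule: right_chain.induct) auto

lemma inorder_left_chain: "inorder (left_chain L xs) = inorder L @ chain_inorder xs"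
  by (induction L xs rule: left_chain.induct) auto

lemma left_chain_snoc: "left_chain L (xs @ [(c, G)]) = Node (left_chain L xs) c G"
  by (induction L xs rule: left_chain.induct) auto

fun right_chain_ctx :: "ctx \<Rightarrow> (nat \<times> ctx) list \<Rightarrow> ctx" where
  "right_chain_ctx L [] = L"
| "right_chain_ctx L ((c, G) # xs) = CNode L c (right_chain_ctx G xs)"

fun left_chain_ctx :: "ctx \<Rightarrow> (nat \<times> ctx) list \<Rightarrow> ctx" where
  "left_chain_ctx L [] = L"
| "left_chain_ctx L ((c, G) # xs) = left_chain_ctx (CNode L c G) xs"

lemma fill_right_chain_ctx:
  "fill (right_chain_ctx L xs) U = right_chain (fill L U) (map (\<lambda>(c, G). (c, fill G U)) xs)"
  by (induction L xs rule: right_chain_ctx.induct) auto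

lemma fill_left_chain_ctx:
  "fill (left_chain_ctx L xs) U = left_chain (fill L U) (map (\<lambda>(c, G). (c, fill G U)) xs)"
  by (induction L xs rule: left_chain_ctx.induct) auto

lemma ctx_holes_right_chain_ctx:
  "ctx_holes (right_chain_ctx L xs) = ctx_holes L \<union> (\<Union>p\<in>set xs. ctx_holes (snd p))"
  by (induction L xs rule: right_chain_ctx.induct) auto

lemma ctx_holes_left_chain_ctx:
  "ctx_holes (left_chain_ctx L xs) = ctx_holes L \<union> (\<Union>p\<in>set xs. ctx_holes (snd p))"
  by (induction L xs rule: left_chain_ctx.induct) auto

lemma ctx_size_left_chain_ctx:
  "ctx_size (left_chain_ctx L xs) = ctx_size L + (\<Sum>p\<leftarrow>xs. Suc (ctx_size (snd p)))"
  by (induction L xs rule: left_chain_ctx.induct) auto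

text \<open>Before round \<open>j\<close>, the tree is
  \<open>round_tree j\<close>: the keys of round \<open>j\<close> form its right spine, the \<open>j\<close> visited keys of track 0
  hang to the left, and between the round keys of tracks \<open>a\<close> and \<open>a + 1\<close> hangs \<open>gadget j a\<close>, made of
  the remaining keys of track \<open>a\<close> (its last key on top) and the visited keys of track \<open>a + 1\<close>.
  The round is served by successive rotations along the spine (\<open>rotated_tree\<close>), and its last
  access rebuilds the tree for the next round, touching \<open>O(k)\<close> nodes.\<close>

context
  fixes k M w :: nat
  assumes k: "k \<ge> 2" and w_def: "w = Suc M"
begin

definition round_key :: "nat \<Rightarrow> nat \<Rightarrow> nat" where
  "round_key j a = a * w + j + 1"

definition gadget :: "nat \<Rightarrow> nat \<Rightarrow> nat tree" where
  "gadget j a = Node (rpath (a * w + j + 2) (M - j - 1)) ((a + 1) * w)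
      (if a + 1 < k then lpath ((a + 1) * w + 1) j else Leaf)"

definition round_items :: "nat \<Rightarrow> (nat \<times> nat tree) list" where
  "round_items j = map (\<lambda>a. (round_key j a, gadget j a)) [0..<k]"

definition round_tree :: "nat \<Rightarrow> nat tree" where
  "round_tree j = right_chain (lpath 1 j) (round_items j)"

definition rotated_tree :: "nat \<Rightarrow> nat \<Rightarrow> nat tree" where
  "rotated_tree j i = Node (left_chain (lpath 1 j) (take i (round_items j))) (round_key j i)
     (right_chain (gadget j i) (drop (Suc i) (round_items j)))"

lemma length_round_items [simp]: "length (round_items j) = k"
  by (simp add: round_items_def)

lemma round_items_nth: "i < k \<Longrightarrow> round_items j ! i = (round_key j i, gadget j i)"
  by (simp add: round_items_def)

lemma drop_round_items: "i < k \<Longrightarrow>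
    drop i (round_items j) = (round_key j i, gadget j i) # drop (Suc i) (round_items j)"
  unfolding round_items_def drop_map drop_upt by (simp add: upt_conv_Cons)

lemma key_gadget_inorder:
  assumes "a < k" "j < M"
  shows "round_key j a # inorder (gadget j a) =
    [a * w + j + 1..<(if a + 1 < k then (a + 1) * w + j + 1 else (a + 1) * w + 1)]"
proof -
  have e: "a * w + j + 2 + (M - j - 1) = (a + 1) * w" using assms w_def by simp
  have i1: "inorder (rpath (a * w + j + 2) (M - j - 1)) = [a * w + j + 2..<(a + 1) * w]"
  proof -
    have "inorder (rpath (a * w + j + 2) (M - j - 1)) = [a * w + j + 2..<a * w + j + 2 + (M - j - 1)]"
      by (rule inorder_rpath)
    thus ?thesis by (simp only: e)
  qed
  have "round_key j a # inorder (rpath (a * w + j + 2) (M - j - 1)) @ [(a + 1) * w] =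
      [a * w + j + 1..<(a + 1) * w + 1]"
  proof -
    have "a * w + j + 1 < (a + 1) * w + 1" using assms w_def by simp
    hence "[a * w + j + 1..<(a + 1) * w + 1] = (a * w + j + 1) # [a * w + j + 2..<(a + 1) * w + 1]"
      by (simp add: upt_conv_Cons)
    moreover have "[a * w + j + 2..<(a + 1) * w + 1] = [a * w + j + 2..<(a + 1) * w] @ [(a + 1) * w]"
      using e by simp
    ultimately show ?thesis using i1 by (simp add: round_key_def)
  qed
  moreover have "[a * w + j + 1..<(a + 1) * w + 1] @ [(a + 1) * w + 1..<(a + 1) * w + 1 + j] =
      [a * w + j + 1..<(a + 1) * w + j + 1]"
    using assms w_def by (subst upt_append) auto
  moreover have E: "round_key j a # inorder (gadget j a) =
      (round_key j a # inorder (rpath (a * w + j + 2) (M - j - 1)) @ [(a + 1) * w]) @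
      inorder (if a + 1 < k then lpath ((a + 1) * w + 1) j else Leaf)"
    by (simp add: gadget_def)
  ultimately show ?thesis
    by (cases "a + 1 < k") (simp_all only: E inorder_lpath if_True if_False inorder.simps append_Nil2)
qed

lemma chain_inorder_gadgets:
  assumes "j < M"
  shows "d \<le> k \<Longrightarrow> d \<ge> 1 \<Longrightarrow> chain_inorder (map (\<lambda>a. (round_key j a, gadget j a)) [k - d..<k]) =
    [(k - d) * w + j + 1..<k * w + 1]"
proof (induction d)
  case 0 thus ?case by simp
next
  case (Suc d)
  show ?case
  proof (cases "d = 0")
    case True
    hence "k - Suc d = k - 1" by simp
    moreover have "[k - 1..<k] = [k - 1]" using k by (simp add: upt_conv_Cons)
    ultimately show ?thesis using key_gadget_inorder[of "k - 1" j] assms k True by simp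
  next
    case False
    define a where "a = k - Suc d"
    have a: "a < k" "a + 1 < k" "Suc a = k - d" using Suc.prems False by (auto simp: a_def)
    have up: "[a..<k] = a # [k - d..<k]" using a by (simp add: upt_conv_Cons)
    have IH: "chain_inorder (map (\<lambda>a. (round_key j a, gadget j a)) [k - d..<k]) =
        [(k - d) * w + j + 1..<k * w + 1]"
      using Suc False by simp
    have pc: "round_key j a # inorder (gadget j a) = [a * w + j + 1..<(a + 1) * w + j + 1]"
      using key_gadget_inorder[OF a(1) assms] a(2) by simp
    have "k - d = a + 1" using a by simp
    hence "chain_inorder (map (\<lambda>a. (round_key j a, gadget j a)) [a..<k]) =
        [a * w + j + 1..<(a + 1) * w + j + 1] @ [(a + 1) * w + j + 1..<k * w + 1]"
      using up IH pc by simp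
    also have "\<dots> = [a * w + j + 1..<k * w + 1]"
    proof (rule upt_append)
      show "a * w + j + 1 \<le> (a + 1) * w + j + 1" by simp
      have "(a + 2) * w \<le> k * w" using a(2) by (intro mult_le_mono1) simp
      thus "(a + 1) * w + j + 1 \<le> k * w + 1" using assms w_def by simp
    qed
    finally show ?thesis by (simp add: a_def)
  qed
qed

lemma inorder_round_tree:
  assumes "j < M" shows "inorder (round_tree j) = [1..<k * w + 1]"
proof -
  have "chain_inorder (round_items j) = [j + 1..<k * w + 1]"
    using chain_inorder_gadgets[OF assms, of k] k by (simp add: round_items_def)
  moreover have "[1..<1 + j] @ [j + 1..<k * w + 1] = [1..<k * w + 1]"
  proof -
    have "w \<le> k * w" using k by simp
    hence "j + 1 \<le> k * w + 1" using assms w_def by simp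
    thus ?thesis using upt_append[of 1 "j + 1" "k * w + 1"] by (simp add: add.commute)
  qed
  ultimately show ?thesis by (simp add: round_tree_def inorder_right_chain inorder_lpath)
qed

lemma inorder_rotated_tree:
  assumes "j < M" "i < k" shows "inorder (rotated_tree j i) = [1..<k * w + 1]"
proof -
  have "chain_inorder (round_items j) =
      chain_inorder (take i (round_items j)) @ chain_inorder (drop i (round_items j))"
    by (simp flip: chain_inorder_simps(3))
  hence "chain_inorder (round_items j) = chain_inorder (take i (round_items j)) @
      round_key j i # inorder (gadget j i) @ chain_inorder (drop (Suc i) (round_items j))"
    by (simp only: drop_round_items[OF assms(2)] chain_inorder_simps(2))
  hence "inorder (rotated_tree j i) = inorder (round_tree j)"
    by (simp add: rotated_tree_def round_tree_def inorder_right_chain inorder_left_chain)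
  thus ?thesis using inorder_round_tree assms by simp
qed

lemma bst_on_round_tree: "j < M \<Longrightarrow> bst_on (k * w) (round_tree j)"
  using inorder_round_tree bst_on_iff_inorder by blast

lemma bst_on_rotated_tree: "j < M \<Longrightarrow> i < k \<Longrightarrow> bst_on (k * w) (rotated_tree j i)"
  using inorder_rotated_tree bst_on_iff_inorder by blast

lemma round_tree_eq_rotated_tree: "round_tree j = rotated_tree j 0"
proof -
  have "0 < k" using k by simp
  from drop_round_items[OF this, of j]
  have "right_chain (lpath 1 j) (round_items j) =
      right_chain (lpath 1 j) ((round_key j 0, gadget j 0) # drop 1 (round_items j))"
    by (simp only: drop_0 One_nat_def)
  thus ?thesis by (simp add: round_tree_def rotated_tree_def)
qed

lemma valid_step_round_tree_root:
  "j < M \<Longrightarrow> valid_step (round_tree j) (round_key j 0) {round_key j 0} (round_tree j)"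
  using valid_step_root bst_on_rotated_tree[of j 0] k round_tree_eq_rotated_tree
  unfolding rotated_tree_def bst_on_def by simp

lemma valid_step_rotated_tree:
  assumes "j < M" "1 \<le> i" "i < k"
  shows "valid_step (rotated_tree j (i - 1)) (round_key j i) {round_key j (i - 1), round_key j i}
    (rotated_tree j i)"
proof -
  let ?L = "left_chain (lpath 1 j) (take (i - 1) (round_items j))"
    and ?R = "right_chain (gadget j i) (drop (Suc i) (round_items j))"
  have "take i (round_items j) = take (i - 1) (round_items j) @ [(round_key j (i - 1), gadget j (i - 1))]"
    using assms take_Suc_conv_app_nth[of "i - 1" "round_items j"] round_items_nth[of "i - 1" j] by simp
  hence before:
    "rotated_tree j i = Node (Node ?L (round_key j (i - 1)) (gadget j (i - 1))) (round_key j i) ?R"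
    by (simp add: rotated_tree_def left_chain_snoc)
  have after:
    "rotated_tree j (i - 1) = Node ?L (round_key j (i - 1)) (Node (gadget j (i - 1)) (round_key j i) ?R)"
    using drop_round_items[of i j] assms by (simp add: rotated_tree_def)
  have "bst (rotated_tree j (i - 1))" using bst_on_rotated_tree assms unfolding bst_on_def by simp
  thus ?thesis unfolding before after by (intro valid_step_rotate)
qed

text \<open>The last access of round \<open>j\<close> touches the nodes of \<open>transition_ctx j\<close> and rebuilds them as
  \<open>next_round_ctx j\<close>. Hole 0 holds the visited keys of track 0, hole \<open>2 a + 1\<close> the keys of track \<open>a\<close>
  from \<open>a * w + j + 3\<close> on except its last one, and hole \<open>2 a + 2\<close> the visited keys of track \<open>a + 1\<close>.\<close>

definition transition_filler :: "nat \<Rightarrow> nat \<Rightarrow> nat tree" where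
  "transition_filler j i = (if i = 0 then lpath 1 j
     else if odd i then rpath ((i div 2) * w + j + 3) (M - j - 2)
     else if i div 2 < k then lpath ((i div 2) * w + 1) j else Leaf)"

definition gadget_ctx :: "nat \<Rightarrow> nat \<Rightarrow> ctx" where
  "gadget_ctx j a = CNode (CNode CLeaf (a * w + j + 2) (Hole (2 * a + 1))) ((a + 1) * w) (Hole (2 * a + 2))"

definition next_gadget_ctx :: "nat \<Rightarrow> nat \<Rightarrow> ctx" where
  "next_gadget_ctx j a = CNode (Hole (2 * a + 1)) ((a + 1) * w)
     (if a + 1 < k then CNode (Hole (2 * a + 2)) (round_key j (a + 1)) CLeaf else Hole (2 * a + 2))"

definition transition_ctx :: "nat \<Rightarrow> ctx" where
  "transition_ctx j = CNode (left_chain_ctx (Hole 0) (map (\<lambda>a. (round_key j a, gadget_ctx j a)) [0..<k - 2]))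
     (round_key j (k - 2)) (CNode (gadget_ctx j (k - 2)) (round_key j (k - 1)) (gadget_ctx j (k - 1)))"

definition next_round_ctx :: "nat \<Rightarrow> ctx" where
  "next_round_ctx j = right_chain_ctx (CNode (Hole 0) (round_key j 0) CLeaf)
     (map (\<lambda>a. (round_key (Suc j) a, next_gadget_ctx j a)) [0..<k])"

lemma transition_filler_odd: "transition_filler j (2 * a + 1) = rpath (a * w + j + 3) (M - j - 2)"
  by (simp add: transition_filler_def)

lemma transition_filler_even:
  "transition_filler j (2 * a + 2) = (if a + 1 < k then lpath ((a + 1) * w + 1) j else Leaf)"
  by (simp add: transition_filler_def)

lemma fill_gadget_ctx:
  assumes "j + 2 \<le> M" shows "fill (gadget_ctx j a) (transition_filler j) = gadget j a"
proof -
  have "M - j - 1 = Suc (M - j - 2)" "a * w + j + 3 = Suc (a * w + j + 2)" using assms by simp_all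
  thus ?thesis unfolding gadget_ctx_def gadget_def
    by (simp only: fill.simps rpath.simps transition_filler_odd transition_filler_even)
qed

lemma fill_next_gadget_ctx: "fill (next_gadget_ctx j a) (transition_filler j) = gadget (Suc j) a"
proof -
  have "a * w + Suc j + 2 = a * w + j + 3" "M - Suc j - 1 = M - j - 2"
    "round_key j (a + 1) = (a + 1) * w + 1 + j"
    by (simp_all add: round_key_def)
  thus ?thesis unfolding next_gadget_ctx_def gadget_def
    by (cases "a + 1 < k") (simp_all only: fill.simps if_True if_False lpath.simps
        transition_filler_odd transition_filler_even)
qed

lemma fill_transition_ctx:
  assumes "j + 2 \<le> M" shows "fill (transition_ctx j) (transition_filler j) = rotated_tree j (k - 2)"
proof -
  have items: "map (\<lambda>(c, G). (c, fill G (transition_filler j)))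
      (map (\<lambda>a. (round_key j a, gadget_ctx j a)) [0..<k - 2]) = take (k - 2) (round_items j)"
    using assms by (simp add: round_items_def fill_gadget_ctx take_map)
  have filler0: "transition_filler j 0 = lpath 1 j" by (simp add: transition_filler_def)
  have "drop (Suc (k - 2)) (round_items j) = [(round_key j (k - 1), gadget j (k - 1))]"
    using drop_round_items[of "k - 1" j] k by (simp add: Suc_diff_Suc numeral_2_eq_2)
  hence "Node (left_chain (lpath 1 j) (take (k - 2) (round_items j))) (round_key j (k - 2))
      (Node (gadget j (k - 2)) (round_key j (k - 1)) (gadget j (k - 1))) = rotated_tree j (k - 2)"
    by (simp add: rotated_tree_def)
  thus ?thesis unfolding transition_ctx_def fill.simps fill_left_chain_ctx fill_gadget_ctx[OF assms]
      items filler0 .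
qed

lemma fill_next_round_ctx: "fill (next_round_ctx j) (transition_filler j) = round_tree (Suc j)"
proof -
  have "map (\<lambda>(c, G). (c, fill G (transition_filler j)))
      (map (\<lambda>a. (round_key (Suc j) a, next_gadget_ctx j a)) [0..<k]) = round_items (Suc j)"
    by (simp add: round_items_def fill_next_gadget_ctx)
  moreover have "fill (CNode (Hole 0) (round_key j 0) CLeaf) (transition_filler j) = lpath 1 (Suc j)"
    by (simp add: transition_filler_def round_key_def)
  ultimately show ?thesis unfolding next_round_ctx_def round_tree_def fill_right_chain_ctx by simp
qed

lemma ctx_holes_transition_ctx: "ctx_holes (transition_ctx j) \<subseteq> ctx_holes (next_round_ctx j)"
proof -
  let ?H = "{0} \<union> (\<Union>a\<in>{0..<k}. {2 * a + 1, 2 * a + 2})"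
  have "ctx_holes (transition_ctx j) \<subseteq> ?H"
    using k unfolding transition_ctx_def by (force simp: ctx_holes_left_chain_ctx gadget_ctx_def)
  moreover have "ctx_holes (next_gadget_ctx j a) = {2 * a + 1, 2 * a + 2}" for a
    by (auto simp: next_gadget_ctx_def)
  hence "ctx_holes (next_round_ctx j) = ?H"
    by (simp add: next_round_ctx_def ctx_holes_right_chain_ctx)
  ultimately show ?thesis by simp
qed

lemma card_ctx_keys_transition_ctx: "card (ctx_keys (transition_ctx j)) \<le> 3 * k"
proof -
  have "ctx_size (transition_ctx j) = 3 * k"
    using k by (simp add: transition_ctx_def ctx_size_left_chain_ctx gadget_ctx_def sum_list_triv comp_def)
  thus ?thesis using card_ctx_keys_le[of "transition_ctx j"] by simp
qed

lemma valid_step_next_round: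
  assumes "j + 2 \<le> M"
  shows "valid_step (rotated_tree j (k - 2)) (round_key j (k - 1)) (ctx_keys (transition_ctx j))
    (round_tree (Suc j))"
proof -
  have bst: "bst_on (k * w) (rotated_tree j (k - 2))" "bst_on (k * w) (round_tree (Suc j))"
    using bst_on_rotated_tree[of j "k - 2"] bst_on_round_tree[of "Suc j"] assms k by auto
  have "valid_step (fill (transition_ctx j) (transition_filler j)) (round_key j (k - 1))
      (ctx_keys (transition_ctx j)) (fill (next_round_ctx j) (transition_filler j))"
  proof (rule valid_step_fill)
    show "bst (fill (transition_ctx j) (transition_filler j))"
      "bst (fill (next_round_ctx j) (transition_filler j))"
      "set_tree (fill (next_round_ctx j) (transition_filler j)) =
        set_tree (fill (transition_ctx j) (transition_filler j))"
      using bst unfolding fill_transition_ctx[OF assms] fill_next_round_ctx bst_on_def by simp_all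
  qed (fact ctx_holes_transition_ctx, simp add: transition_ctx_def)
  thus ?thesis unfolding fill_transition_ctx[OF assms] fill_next_round_ctx .
qed

lemma run_rotations:
  assumes "j < M"
  shows "i < k \<Longrightarrow> \<exists>R. run (rotated_tree j 0) (map (round_key j) [1..<Suc i]) R (rotated_tree j i) \<and>
    exec_cost R \<le> 2 * i"
proof (induction i)
  case 0 show ?case by (intro exI[of _ "[]"]) (simp add: run_nil)
next
  case (Suc i)
  let ?P = "{round_key j i, round_key j (Suc i)}"
  obtain R where R: "run (rotated_tree j 0) (map (round_key j) [1..<Suc i]) R (rotated_tree j i)"
    "exec_cost R \<le> 2 * i"
    using Suc by auto
  have "valid_step (rotated_tree j i) (round_key j (Suc i)) ?P (rotated_tree j (Suc i))"
    using valid_step_rotated_tree[OF assms, of "Suc i"] Suc.prems by simp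
  hence "run (rotated_tree j 0) (map (round_key j) [1..<Suc (Suc i)]) (R @ [(?P, rotated_tree j (Suc i))])
      (rotated_tree j (Suc i))"
    using run_append[OF R(1) run_single] by simp
  moreover have "card ?P \<le> 2" by (simp add: card_insert_if)
  ultimately show ?case using R(2) by (intro exI[of _ "R @ [(?P, rotated_tree j (Suc i))]"]) simp
qed

lemma run_round:
  assumes "j < M"
  shows "\<exists>R T'. run (round_tree j) (round_keys k w j) R T' \<and> exec_cost R \<le> 5 * k \<and>
    (j + 2 \<le> M \<longrightarrow> T' = round_tree (Suc j))"
proof -
  obtain m where m: "k = Suc (Suc m)" using k by (metis add_2_eq_Suc le_Suc_ex)
  have "[0..<k] = 0 # [1..<Suc (k - 2)] @ [k - 1]" unfolding m by (simp add: upt_conv_Cons)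
  hence keys:
    "round_keys k w j = (round_key j 0 # map (round_key j) [1..<Suc (k - 2)]) @ [round_key j (k - 1)]"
    unfolding round_keys_def round_key_def by simp
  obtain R where R: "run (rotated_tree j 0) (map (round_key j) [1..<Suc (k - 2)]) R (rotated_tree j (k - 2))"
    "exec_cost R \<le> 2 * (k - 2)"
    using run_rotations[OF assms, of "k - 2"] k by auto
  have "run (round_tree j) (round_key j 0 # map (round_key j) [1..<Suc (k - 2)])
      (({round_key j 0}, round_tree j) # R) (rotated_tree j (k - 2))"
    using run_cons[OF valid_step_round_tree_root[OF assms]] R(1) round_tree_eq_rotated_tree by simp
  moreover obtain P T' where "valid_step (rotated_tree j (k - 2)) (round_key j (k - 1)) P T'"
    "card P \<le> 3 * k" "j + 2 \<le> M \<longrightarrow> T' = round_tree (Suc j)"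
  proof (cases "j + 2 \<le> M")
    case True
    thus ?thesis using that valid_step_next_round card_ctx_keys_transition_ctx by blast
  next
    case False
    have "valid_step (rotated_tree j (k - 2)) (round_key j (k - 1))
        {round_key j (k - 2), round_key j (k - 1)} (rotated_tree j (k - 1))"
      using valid_step_rotated_tree[OF assms, of "k - 1"] k by (simp add: numeral_2_eq_2)
    moreover have "card {round_key j (k - 2), round_key j (k - 1)} \<le> 3 * k"
      using k by (simp add: card_insert_if)
    ultimately show ?thesis using that False by blast
  qed
  ultimately have
    "run (round_tree j) (round_keys k w j) ((({round_key j 0}, round_tree j) # R) @ [(P, T')]) T'"
    unfolding keys by (intro run_append run_single)
  moreover have "exec_cost ((({round_key j 0}, round_tree j) # R) @ [(P, T')]) \<le> 5 * k"
    using R(2) \<open>card P \<le> 3 * k\<close> k by simp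
  ultimately show ?thesis using \<open>j + 2 \<le> M \<longrightarrow> T' = round_tree (Suc j)\<close> by blast
qed

lemma run_rounds:
  "j < M \<Longrightarrow> \<exists>R. run (round_tree 0) (concat (map (round_keys k w) [0..<j])) R (round_tree j) \<and>
    exec_cost R \<le> 5 * k * j"
proof (induction j)
  case 0 show ?case by (intro exI[of _ "[]"]) (simp add: run_nil)
next
  case (Suc j)
  obtain R where R: "run (round_tree 0) (concat (map (round_keys k w) [0..<j])) R (round_tree j)"
    "exec_cost R \<le> 5 * k * j"
    using Suc by auto
  obtain R' where R': "run (round_tree j) (round_keys k w j) R' (round_tree (Suc j))" "exec_cost R' \<le> 5 * k"
    using run_round[of j] Suc.prems by auto
  show ?case using run_append[OF R(1) R'(1)] R(2) R'(2)
    by (intro exI[of _ "R @ R'"]) (simp add: algebra_simps)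
qed

text \<open>The initial accesses to key 1 touch only the root of \<open>round_tree 0\<close>.\<close>

lemma run_hard_seq:
  assumes "M \<ge> 1"
  shows "\<exists>R T'. run (round_tree 0) (hard_seq k w M) R T' \<and> exec_cost R \<le> 5 * (k * w)"
proof -
  have root: "valid_step (round_tree 0) 1 {1} (round_tree 0)"
    using valid_step_round_tree_root[of 0] assms by (simp add: round_key_def)
  have prefix: "run (round_tree 0) (replicate c 1) (replicate c ({1}, round_tree 0)) (round_tree 0)" for c
  proof (induction c)
    case (Suc c) thus ?case using run_cons[OF root Suc.IH] by simp
  qed (simp add: run_nil)
  have prefix_cost: "exec_cost (replicate c ({1::nat}, round_tree 0)) = c" for c
    by (induction c) simp_all
  obtain R where R: "run (round_tree 0) (concat (map (round_keys k w) [0..<M - 1])) R (round_tree (M - 1))"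
    "exec_cost R \<le> 5 * k * (M - 1)"
    using run_rounds[of "M - 1"] assms by auto
  obtain R' T' where R': "run (round_tree (M - 1)) (round_keys k w (M - 1)) R' T'" "exec_cost R' \<le> 5 * k"
    using run_round[of "M - 1"] assms by auto
  have "hard_seq k w M = replicate k 1 @ concat (map (round_keys k w) [0..<M - 1]) @ round_keys k w (M - 1)"
    using assms by (cases M) (simp_all add: hard_seq_def)
  hence "run (round_tree 0) (hard_seq k w M) (replicate k ({1}, round_tree 0) @ R @ R') T'"
    using run_append[OF prefix run_append[OF R(1) R'(1)]] by simp
  moreover have "k + 5 * k * (M - 1) + 5 * k \<le> 5 * (k * w)"
    using assms w_def by (cases M) (auto simp: algebra_simps)
  hence "exec_cost (replicate k ({1}, round_tree 0) @ R @ R') \<le> 5 * (k * w)"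
    using R(2) R'(2) prefix_cost[of k] by simp
  ultimately show ?thesis by blast
qed

lemma OPT_hard_seq_le: "M \<ge> 1 \<Longrightarrow> OPT (k * w) (hard_seq k w M) \<le> 5 * (k * w)"
  using run_hard_seq bst_on_round_tree[of 0] OPT_le_exec_cost
  by (meson le_trans less_le_trans zero_less_one)

end

lemma avoids_rev_upt_if_nondecreasing_cover:
  assumes c: "\<And>p. p < length xs \<Longrightarrow> c p < k"
    and mono: "\<And>p1 p2. p1 < p2 \<Longrightarrow> p2 < length xs \<Longrightarrow> c p1 = c p2 \<Longrightarrow> xs ! p1 \<le> xs ! p2"
  shows "avoids xs (rev [1..<k + 2])"
  unfolding avoids_def contains_pattern_def
proof
  assume "\<exists>is. length is = length (rev [1..<k + 2]) \<and> sorted_wrt (<) is \<and> (\<forall>i\<in>set is. i < length xs) \<and>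
    (\<forall>a<length (rev [1..<k + 2]). \<forall>b<length (rev [1..<k + 2]).
      (xs ! (is ! a) < xs ! (is ! b)) = (rev [1..<k + 2] ! a < rev [1..<k + 2] ! b))"
  moreover have len: "length (rev [1..<k + 2]) = k + 1" by simp
  ultimately obtain ps where ps: "length ps = k + 1" "sorted_wrt (<) ps" "\<forall>i\<in>set ps. i < length xs"
    "\<forall>a<k + 1. \<forall>b<k + 1. (xs ! (ps ! a) < xs ! (ps ! b)) = (rev [1..<k + 2] ! a < rev [1..<k + 2] ! b)"
    by (simp only: len) blast
  have "rev [1..<k + 2] ! a = k + 1 - a" if "a < k + 1" for a
  proof -
    have "rev [1..<k + 2] ! a = [1..<k + 2] ! (length [1..<k + 2] - Suc a)"
      by (rule rev_nth) (use that in simp)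
    also have "length [1..<k + 2] - Suc a = k - a" using that by simp
    also have "[1..<k + 2] ! (k - a) = 1 + (k - a)" by (rule nth_upt) (use that in simp)
    finally show ?thesis using that by simp
  qed
  hence dec: "xs ! (ps ! b) < xs ! (ps ! a)" if "a < b" "b < k + 1" for a b
    using ps(4) that by auto
  have "inj_on (\<lambda>a. c (ps ! a)) {..<k + 1}"
  proof (rule inj_onI, rule ccontr)
    fix a b assume ab: "a \<in> {..<k + 1}" "b \<in> {..<k + 1}" "c (ps ! a) = c (ps ! b)" "a \<noteq> b"
    have "ps ! a < ps ! b \<or> ps ! b < ps ! a" "ps ! a < length xs" "ps ! b < length xs"
      using ps ab by (auto simp: sorted_wrt_iff_nth_less linorder_neq_iff)
    moreover have "a < b \<longleftrightarrow> ps ! a < ps ! b"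
      using ps(1,2) ab
      by (metis lessThan_iff linorder_neq_iff not_less_iff_gr_or_eq sorted_wrt_iff_nth_less)
    ultimately show False
      using mono[of "ps ! a" "ps ! b"] mono[of "ps ! b" "ps ! a"] dec[of a b] dec[of b a] ab
      by (auto simp: not_less_iff_gr_or_eq)
  qed
  moreover have "(\<lambda>a. c (ps ! a)) ` {..<k + 1} \<subseteq> {..<k}"
    using c ps(1,3) by auto
  ultimately have "card {..<k + 1} \<le> card {..<k}" by (intro card_inj_on_le) auto
  thus False by simp
qed

lemma nth_concat_round_keys:
  "q < k * m \<Longrightarrow> concat (map (round_keys k w) [0..<m]) ! q = (q mod k) * w + q div k + 1"
proof (induction m)
  case (Suc m)
  have len: "length (concat (map (round_keys k w) [0..<m])) = k * m"
    by (simp add: length_concat_round_keys)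
  show ?case
  proof (cases "q < k * m")
    case True thus ?thesis using Suc len by (simp add: nth_append)
  next
    case False
    define r where "r = q - k * m"
    have r: "r < k" "q = r + k * m" using False Suc.prems by (auto simp: r_def)
    hence "q div k = m" "q mod k = r" by auto
    moreover have "concat (map (round_keys k w) [0..<Suc m]) ! q = round_keys k w m ! r"
      using False len by (simp add: nth_append r_def)
    moreover have "round_keys k w m ! r = r * w + m + 1" using r by (simp add: round_keys_def)
    ultimately show ?thesis by simp
  qed
qed simp

text \<open>Within a track, the keys of \<open>hard_seq\<close> increase with time.\<close>

lemma hard_seq_avoids:
  assumes k: "k \<ge> 2" and w: "M < w"
  shows "avoids (hard_seq k w M) (rev [1..<k + 2])"
proof (rule avoids_rev_upt_if_nondecreasing_cover)
  let ?S = "hard_seq k w M" and ?c = "\<lambda>p. if p < k then 0 else (p - k) mod k"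
  have len: "length ?S = k + k * M" by (simp add: hard_seq_def length_concat_round_keys)
  have nth: "?S ! p = (if p < k then 1 else ((p - k) mod k) * w + (p - k) div k + 1)"
    if "p < length ?S" for p
    using that len nth_concat_round_keys[of "p - k" k M w] by (auto simp: hard_seq_def nth_append)
  show "?c p < k" if "p < length ?S" for p using k by auto
  show "?S ! p1 \<le> ?S ! p2" if "p1 < p2" "p2 < length ?S" "?c p1 = ?c p2" for p1 p2
  proof (cases "p1 < k")
    case False
    hence "(p1 - k) div k \<le> (p2 - k) div k" "\<not> p2 < k" using that by (auto intro: div_le_mono)
    thus ?thesis using nth[of p1] nth[of p2] that False by simp
  qed (use nth[of p1] nth[of p2] that in auto)
qed

lemma scaled_xlog_le:
  assumes k: "k \<ge> 1" and L128: "128 \<le> L" and L: "2 * k * k \<le> L" and M: "M = 2 * k * k * L"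
  shows "ln 2 / 32 * real (Suc M) * log 2 (real (Suc M)) \<le> real M / 4 * (ln (real L) - 1)"
proof -
  have "exp (4::real) = exp 1 ^ 4" using exp_of_nat_mult[of 4 "1::real"] by simp
  also have "\<dots> \<le> 3 ^ 4" by (rule power_mono[OF exp_le]) simp
  finally have "exp (4::real) \<le> 81" by simp
  hence "exp 4 \<le> real L" using L128 by linarith
  hence lnL: "4 \<le> ln (real L)" using L128 by (subst ln_ge_iff) auto
  have "M \<le> L * L" using M L by (simp add: mult_le_mono1)
  moreover have "L * L * 2 \<le> L * L * L" "1 \<le> L * L" using L128 by (intro mult_le_mono2, simp_all)
  ultimately have "Suc M \<le> L * L * L" by linarith
  hence "ln (real (Suc M)) \<le> ln (real L ^ 3)"
    using L128 by (subst ln_le_cancel_iff) (auto simp: power3_eq_cube simp flip: of_nat_mult)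
  hence lnM: "ln (real (Suc M)) \<le> 3 * ln (real L)" using L128 by (simp add: ln_realpow)
  have "M \<ge> 1" using M L128 k by simp
  hence "real (Suc M) \<le> 2 * real M" by simp
  have "ln 2 / 32 * real (Suc M) * log 2 (real (Suc M)) = real (Suc M) * ln (real (Suc M)) / 32"
    by (simp add: log_def)
  also have "\<dots> \<le> (2 * real M) * (3 * ln (real L)) / 32"
    using \<open>real (Suc M) \<le> 2 * real M\<close> lnM by (intro divide_right_mono mult_mono) auto
  also have "\<dots> \<le> real M / 4 * (ln (real L) - 1)"
    using lnL mult_left_mono[OF lnL, of "real M"] by (simp add: field_simps)
  finally show ?thesis .
qed

definition separating_seq :: "real \<Rightarrow> real \<Rightarrow> nat \<Rightarrow> nat \<Rightarrow> nat list \<Rightarrow> bool" where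
  "separating_seq c1 c2 k n S \<longleftrightarrow> length S = n \<and> set S \<subseteq> {1..n} \<and>
     c1 * (real n / real k) * log 2 (real n / real k) \<le> real (LF (k - 1) n S) \<and>
     real (LF k n S) \<le> c2 * real n \<and> avoids S (rev [1..<k + 2]) \<and> real (OPT n S) \<le> c2 * real n"

lemma separating_seq_hard_seq:
  assumes k: "k \<ge> 2" and L: "128 \<le> L" "2 * k * k \<le> L"
  shows "separating_seq (ln 2 / 32) 5 k (k * Suc (2 * k * k * L))
    (hard_seq k (Suc (2 * k * k * L)) (2 * k * k * L))"
proof -
  define M where "M = 2 * k * k * L"
  have "M \<ge> 1" using k L by (simp add: M_def)
  have "real k \<noteq> 0" using k by simp
  hence n_div_k: "real (k * Suc M) / real k = real (Suc M)" by (simp add: field_simps)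
  have "ln 2 / 32 * real (Suc M) * log 2 (real (Suc M)) \<le> real M / 4 * (ln (real L) - 1)"
    using scaled_xlog_le[OF _ L M_def] k by simp
  also have "\<dots> \<le> real (LF (k - 1) (k * Suc M) (hard_seq k (Suc M) M))"
    using LF_hard_seq_ge[OF k lessI _ M_def] L by simp
  finally have lower: "ln 2 / 32 * real (Suc M) * log 2 (real (Suc M)) \<le>
      real (LF (k - 1) (k * Suc M) (hard_seq k (Suc M) M))" .
  have "real (LF k (k * Suc M) (hard_seq k (Suc M) M)) \<le> real (2 * (k * Suc M))"
    using LF_hard_seq_le[of k M "Suc M"] k by (simp only: of_nat_le_iff)
  hence upper: "real (LF k (k * Suc M) (hard_seq k (Suc M) M)) \<le> 5 * real (k * Suc M)" by simp
  have "real (OPT (k * Suc M) (hard_seq k (Suc M) M)) \<le> real (5 * (k * Suc M))"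
    using OPT_hard_seq_le[OF k refl \<open>M \<ge> 1\<close>] by (simp only: of_nat_le_iff)
  hence opt: "real (OPT (k * Suc M) (hard_seq k (Suc M) M)) \<le> 5 * real (k * Suc M)" by simp
  show ?thesis
    unfolding separating_seq_def M_def[symmetric] n_div_k
    using lower upper opt k length_hard_seq set_hard_seq_subset[of k M "Suc M"]
      hard_seq_avoids[OF k, of M "Suc M"]
    by simp
qed

lemma infinite_separating_seq_lengths:
  assumes "k \<ge> 2"
  shows "infinite {n. \<exists>S. separating_seq (ln 2 / 32) 5 k n S}"
proof -
  let ?n = "\<lambda>L. k * Suc (2 * k * k * L)"
  have "inj_on ?n {max 128 (2 * k * k)..}" using assms by (auto simp: inj_on_def)
  hence "infinite (?n ` {max 128 (2 * k * k)..})" using finite_imageD infinite_Ici by blast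
  moreover have "?n ` {max 128 (2 * k * k)..} \<subseteq> {n. \<exists>S. separating_seq (ln 2 / 32) 5 k n S}"
  proof
    fix n assume "n \<in> ?n ` {max 128 (2 * k * k)..}"
    then obtain L where n: "n = ?n L" and L: "L \<in> {max 128 (2 * k * k)..}" by blast
    have "128 \<le> L" "2 * k * k \<le> L" using L by simp_all
    thus "n \<in> {n. \<exists>S. separating_seq (ln 2 / 32) 5 k n S}"
      using separating_seq_hard_seq[OF assms] n by blast
  qed
  ultimately show ?thesis using infinite_super by blast
qed

theorem mainTheorem13:
  shows "\<exists>c1 c2 :: real. c1 > 0 \<and> c2 > 0 \<and>
    (\<forall>k::nat. k \<ge> 2 \<longrightarrow>
      infinite {n::nat. \<exists>S. length S = n \<and> set S \<subseteq> {1..n} \<and>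
         real (LF (k - 1) n S) \<ge> c1 * (real n / real k) * log 2 (real n / real k) \<and>
         real (LF k n S) \<le> c2 * real n \<and>
         avoids S (rev [1..<k + 2]) \<and>
         real (OPT n S) \<le> c2 * real n})"
  using infinite_separating_seq_lengths unfolding separating_seq_def
  by (intro exI[of _ "ln 2 / 32"] exI[of _ 5]) auto

end
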